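(* Let $n\ge2$ and consider an equation $\sum_{i,j=1}^n f_{ij}({\bf p})u_{x_ix_j}=0$, $p^i=u_{x_i}$, with $(f_{ij})$ symmetric and nondegenerate, with inverse $(f^{ij})$. Define $$s_k=\frac{f^{ij}}{(n+2)(1-n)}\left(\partial_kf_{ij}-n\,\partial_jf_{ik}\right),\qquad c_k=\frac{f^{ij}}{(n+2)(n-1)}\left((n+3)\partial_kf_{ij}-2(n+1)\partial_jf_{ik}\right),$$ $$a_{ijk}=\partial_kf_{ij}-(c_k+2s_k)f_{ij}-s_if_{kj}-s_jf_{ki},$$ where $\partial_k=\partial/\partial p^k$ and repeated indices are summed. The equation is Lagrangian if and only if (1) the tensor $a_{ijk}$ is totally symmetric (equivalently $a_{ijk}=a_{ikj}$), and (2) the covector $s_i$ is a gradient, i.e. $\partial_js_i=\partial_is_j$.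
   Context: The equation is called Lagrangian if there exist a function $g({\bf p})$ such that $(f_{ij})$ is proportional (by a nonvanishing function of ${\bf p}$) to the Hessian matrix $(\partial^2g/\partial p^i\partial p^j)$, i.e. the equation is (up to a factor) the Euler–Lagrange equation of the functional $\int g(u_{x_1},\dots,u_{x_n})\,d{\bf x}$. *)

theory Defs
  imports "HOL-Analysis.Analysis"
begin

definition pd :: "'n::finite \<Rightarrow> (real^'n \<Rightarrow> real) \<Rightarrow> real^'n \<Rightarrow> real" where
  "pd k h p = deriv (\<lambda>t. h (p + t *\<^sub>R axis k 1)) 0"

fun iter_pd :: "'n::finite list \<Rightarrow> (real^'n \<Rightarrow> real) \<Rightarrow> real^'n \<Rightarrow> real" where
  "iter_pd [] h = h"
| "iter_pd (k # ks) h = pd k (iter_pd ks h)"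

definition smooth_on :: "(real^'n::finite) set \<Rightarrow> (real^'n \<Rightarrow> real) \<Rightarrow> bool" where
  "smooth_on U h \<longleftrightarrow> (\<forall>ks. iter_pd ks h differentiable_on U)"

definition fco :: "(real^'n \<Rightarrow> real^'n^'n) \<Rightarrow> 'n::finite \<Rightarrow> 'n \<Rightarrow> real^'n \<Rightarrow> real" where
  "fco F i j p = F p $ i $ j"

definition finv :: "(real^'n \<Rightarrow> real^'n^'n) \<Rightarrow> 'n::finite \<Rightarrow> 'n \<Rightarrow> real^'n \<Rightarrow> real" where
  "finv F i j p = matrix_inv (F p) $ i $ j"

definition s_cov :: "(real^'n \<Rightarrow> real^'n^'n) \<Rightarrow> 'n::finite \<Rightarrow> real^'n \<Rightarrow> real" where
  "s_cov F k p = (\<Sum>i\<in>UNIV. \<Sum>j\<in>UNIV.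
     finv F i j p / ((real CARD('n) + 2) * (1 - real CARD('n))) *
     (pd k (fco F i j) p - real CARD('n) * pd j (fco F i k) p))"

definition c_cov :: "(real^'n \<Rightarrow> real^'n^'n) \<Rightarrow> 'n::finite \<Rightarrow> real^'n \<Rightarrow> real" where
  "c_cov F k p = (\<Sum>i\<in>UNIV. \<Sum>j\<in>UNIV.
     finv F i j p / ((real CARD('n) + 2) * (real CARD('n) - 1)) *
     ((real CARD('n) + 3) * pd k (fco F i j) p
       - 2 * (real CARD('n) + 1) * pd j (fco F i k) p))"

definition a_ten :: "(real^'n \<Rightarrow> real^'n^'n) \<Rightarrow> 'n::finite \<Rightarrow> 'n \<Rightarrow> 'n \<Rightarrow> real^'n \<Rightarrow> real" where
  "a_ten F i j k p = pd k (fco F i j) p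
     - (c_cov F k p + 2 * s_cov F k p) * fco F i j p
     - s_cov F i p * fco F k j p - s_cov F j p * fco F k i p"

text \<open>The equation sum f_ij(p) u_{x_i x_j} = 0 is Lagrangian on V: f is proportional,
  by a nonvanishing function of p, to the Hessian of some (smooth) g.\<close>
definition lagrangian_on :: "(real^'n::finite) set \<Rightarrow> (real^'n \<Rightarrow> real^'n^'n) \<Rightarrow> bool" where
  "lagrangian_on V F \<longleftrightarrow> (\<exists>g \<phi>. smooth_on V g \<and> (\<forall>p\<in>V. \<phi> p \<noteq> 0) \<and>
     (\<forall>p\<in>V. \<forall>i j. fco F i j p = \<phi> p * pd i (pd j g) p))"

end

theory Submission
  imports Defs
begin

text \<open>
  Under a rescaling \<open>F \<mapsto> \<phi> F\<close> the covector \<open>s\<close> is unchanged, \<open>c\<close> becomes \<open>c + \<partial> log \<phi>\<close> and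
  \<open>a\<close> becomes \<open>\<phi> a\<close>.  If \<open>F\<close> is a Hessian, \<open>\<partial>\<^sub>k f\<^sub>i\<^sub>j\<close> is totally symmetric; then
  \<open>f\<^sup>i\<^sup>j \<partial>\<^sub>j f\<^sub>i\<^sub>k = X\<^sub>k := f\<^sup>i\<^sup>j \<partial>\<^sub>k f\<^sub>i\<^sub>j\<close>, so \<open>s = X / (n + 2)\<close>, \<open>c = -s\<close> and \<open>a\<close> is
  totally symmetric, while \<open>X\<close> is closed.  This gives necessity.

  Conversely \<open>c + s = (X - (n + 2) s) / n\<close> is closed, hence equal to \<open>\<partial>\<psi>\<close> on a ball.  For
  \<open>H = exp (-\<psi>) F\<close> one has \<open>c\<^sub>H = -s\<^sub>H\<close>, so the definition of \<open>a\<close> reads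
  \<open>\<partial>\<^sub>k h\<^sub>i\<^sub>j = a\<^sub>i\<^sub>j\<^sub>k + s\<^sub>k h\<^sub>i\<^sub>j + s\<^sub>i h\<^sub>k\<^sub>j + s\<^sub>j h\<^sub>k\<^sub>i\<close>, which is symmetric in \<open>j, k\<close>.  Two
  applications of the Poincar\'e lemma then give \<open>g\<close> with \<open>H = \<nabla>\<^sup>2 g\<close>.
\<close>

lemma pd_has_derivative:
  assumes "(h has_derivative D) (at p)"
  shows "pd k h p = D (axis k 1)"
proof -
  have line: "((\<lambda>t::real. p + t *\<^sub>R axis k 1) has_derivative (\<lambda>t. t *\<^sub>R axis k 1)) (at 0)"
    by (auto intro!: derivative_eq_intros)
  have "((\<lambda>t. h (p + t *\<^sub>R axis k 1)) has_derivative (\<lambda>t. D (t *\<^sub>R axis k 1))) (at 0)"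
    using has_derivative_compose[OF line] assms by (simp add: o_def)
  moreover have "(\<lambda>t. D (t *\<^sub>R axis k 1)) = (*) (D (axis k 1))"
    using has_derivative_linear[OF assms] by (auto simp: linear_scale)
  ultimately have "((\<lambda>t. h (p + t *\<^sub>R axis k 1)) has_real_derivative D (axis k 1)) (at 0)"
    unfolding has_field_derivative_def by simp
  then show ?thesis by (simp add: pd_def DERIV_imp_deriv)
qed

lemma pd_cong_open:
  assumes "open W" "p \<in> W" "\<And>q. q \<in> W \<Longrightarrow> h q = h' q"
  shows "pd k h p = pd k h' p"
proof -
  let ?line = "\<lambda>t::real. p + t *\<^sub>R axis k 1"
  have "open (?line -` W)"
    by (rule continuous_open_vimage[OF assms(1)]) (intro continuous_intros)
  then have "\<forall>\<^sub>F t in nhds 0. h (?line t) = h' (?line t)"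
    unfolding eventually_nhds using assms by (intro exI[of _ "?line -` W"]) auto
  then show ?thesis unfolding pd_def by (rule deriv_cong_ev[OF _ refl])
qed

lemma iter_pd_cong_open:
  assumes "open W" "\<And>q. q \<in> W \<Longrightarrow> h q = h' q" "q \<in> W"
  shows "iter_pd ks h q = iter_pd ks h' q"
  using assms(3)
proof (induction ks arbitrary: q)
  case Nil
  then show ?case using assms(2) by simp
next
  case (Cons k ks)
  then show ?case using pd_cong_open[OF assms(1) Cons.prems, of "iter_pd ks h"] by simp
qed

lemma iter_pd_snoc: "iter_pd (ks @ [k]) h = iter_pd ks (pd k h)"
  by (induction ks) auto

lemma pd_const: "pd k (\<lambda>q. c) p = 0"
  by (simp add: pd_def)

lemma pd_add:
  assumes "a differentiable (at p)" "b differentiable (at p)"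
  shows "pd k (\<lambda>q. a q + b q) p = pd k a p + pd k b p"
proof -
  obtain Da Db where a: "(a has_derivative Da) (at p)" and b: "(b has_derivative Db) (at p)"
    using assms unfolding differentiable_def by blast
  show ?thesis
    using pd_has_derivative[OF has_derivative_add[OF a b]] pd_has_derivative[OF a] pd_has_derivative[OF b]
    by simp
qed

lemma pd_mult:
  assumes "a differentiable (at p)" "b differentiable (at p)"
  shows "pd k (\<lambda>q. a q * b q) p = pd k a p * b p + a p * pd k b p"
proof -
  obtain Da Db where a: "(a has_derivative Da) (at p)" and b: "(b has_derivative Db) (at p)"
    using assms unfolding differentiable_def by blast
  have "pd k (\<lambda>q. a q * b q) p = a p * Db (axis k 1) + Da (axis k 1) * b p"
    by (rule pd_has_derivative[OF has_derivative_mult[OF a b]])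
  then show ?thesis using pd_has_derivative[OF a] pd_has_derivative[OF b] by simp
qed

lemma pd_cmult:
  assumes "a differentiable (at p)"
  shows "pd k (\<lambda>q. c * a q) p = c * pd k a p"
  using pd_mult[of "\<lambda>q. c" p a k] assms by (simp add: pd_const)

lemma pd_divide_const:
  assumes "a differentiable (at p)"
  shows "pd k (\<lambda>q. a q / c) p = pd k a p / c"
  using pd_cmult[OF assms, of k "inverse c"] by (simp add: divide_inverse mult.commute)

lemma pd_diff:
  assumes "a differentiable (at p)" "b differentiable (at p)"
  shows "pd k (\<lambda>q. a q - b q) p = pd k a p - pd k b p"
  using pd_add[OF assms(1), of "\<lambda>q. - b q" k] pd_cmult[OF assms(2), of k "-1"] assms(2)
  by (simp add: differentiable_minus)

lemma pd_sum:
  assumes "finite A" "\<And>x. x \<in> A \<Longrightarrow> f x differentiable (at p)"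
  shows "pd k (\<lambda>q. \<Sum>x\<in>A. f x q) p = (\<Sum>x\<in>A. pd k (f x) p)"
proof -
  obtain D where D: "\<And>x. x \<in> A \<Longrightarrow> (f x has_derivative D x) (at p)"
    using assms(2) unfolding differentiable_def by metis
  have "pd k (\<lambda>q. \<Sum>x\<in>A. f x q) p = (\<Sum>x\<in>A. D x (axis k 1))"
    by (rule pd_has_derivative, rule has_derivative_sum) (use D in auto)
  also have "\<dots> = (\<Sum>x\<in>A. pd k (f x) p)"
    by (rule sum.cong) (auto simp: pd_has_derivative[OF D])
  finally show ?thesis .
qed

lemma pd_inverse:
  assumes "a differentiable (at p)" "a p \<noteq> 0"
  shows "pd k (\<lambda>q. inverse (a q)) p = - (inverse (a p) * pd k a p * inverse (a p))"
proof -
  obtain Da where a: "(a has_derivative Da) (at p)"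
    using assms unfolding differentiable_def by blast
  show ?thesis
    using pd_has_derivative[OF Deriv.has_derivative_inverse[OF assms(2) a]] pd_has_derivative[OF a]
    by simp
qed

lemma pd_exp:
  assumes "a differentiable (at p)"
  shows "pd k (\<lambda>q. exp (a q)) p = exp (a p) * pd k a p"
proof -
  obtain Da where a: "(a has_derivative Da) (at p)"
    using assms unfolding differentiable_def by blast
  have "((\<lambda>q. exp (a q)) has_derivative (\<lambda>h. exp (a p) * Da h)) (at p)"
    using a by (auto intro!: derivative_eq_intros)
  then show ?thesis using pd_has_derivative[OF a] by (simp add: pd_has_derivative)
qed

lemma has_derivative_pd_expansion:
  fixes h :: "real^'n::finite \<Rightarrow> real"
  assumes "h differentiable (at z)"
  shows "(h has_derivative (\<lambda>v. \<Sum>k\<in>UNIV. v$k * pd k h z)) (at z)"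
proof -
  obtain D where D: "(h has_derivative D) (at z)" using assms unfolding differentiable_def by blast
  have "D v = (\<Sum>k\<in>UNIV. v$k * pd k h z)" for v
  proof -
    have "v = (\<Sum>k\<in>UNIV. v$k *\<^sub>R axis k 1)"
      using basis_expansion[of v] by (simp add: scalar_mult_eq_scaleR)
    then have "D v = D (\<Sum>k\<in>UNIV. v$k *\<^sub>R axis k 1)" by simp
    then show ?thesis
      using has_derivative_linear[OF D]
      by (simp add: linear_sum linear_scale pd_has_derivative[OF D])
  qed
  then have "D = (\<lambda>v. \<Sum>k\<in>UNIV. v$k * pd k h z)" by (rule ext)
  then show ?thesis using D by simp
qed

lemma has_real_derivative_along_line:
  fixes h :: "real^'n::finite \<Rightarrow> real"
  assumes "h differentiable (at (a + t *\<^sub>R d))"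
  shows "((\<lambda>t. h (a + t *\<^sub>R d)) has_real_derivative (\<Sum>k\<in>UNIV. d$k * pd k h (a + t *\<^sub>R d))) (at t)"
proof -
  have line: "((\<lambda>t::real. a + t *\<^sub>R d) has_derivative (\<lambda>s. s *\<^sub>R d)) (at t)"
    by (auto intro!: derivative_eq_intros)
  have "((\<lambda>t. h (a + t *\<^sub>R d)) has_derivative (\<lambda>s. \<Sum>k\<in>UNIV. (s *\<^sub>R d)$k * pd k h (a + t *\<^sub>R d))) (at t)"
    using has_derivative_compose[OF line has_derivative_pd_expansion[OF assms]] by (simp add: o_def)
  moreover have "(\<lambda>s. \<Sum>k\<in>UNIV. (s *\<^sub>R d)$k * pd k h (a + t *\<^sub>R d))
      = (*) (\<Sum>k\<in>UNIV. d$k * pd k h (a + t *\<^sub>R d))"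
    by (auto simp: sum_distrib_left algebra_simps intro!: ext)
  ultimately show ?thesis unfolding has_field_derivative_def by simp
qed

lemma sum_times_axis: "(\<Sum>j\<in>UNIV. a j * (axis k (1::real) :: real^'n::finite) $ j) = a k"
  by (simp add: axis_def if_distrib cong: if_cong)

lemma smooth_on_pd: "smooth_on U h \<Longrightarrow> smooth_on U (pd k h)"
  unfolding smooth_on_def by (simp add: iter_pd_snoc[symmetric])

lemma smooth_on_imp_differentiable_on: "smooth_on U h \<Longrightarrow> h differentiable_on U"
  unfolding smooth_on_def by (drule spec[of _ "[]"]) simp

lemma smooth_on_imp_differentiable_at:
  "open U \<Longrightarrow> smooth_on U h \<Longrightarrow> p \<in> U \<Longrightarrow> h differentiable (at p)"
  using smooth_on_imp_differentiable_on differentiable_on_eq_differentiable_at by blast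

lemma smooth_on_subset: "smooth_on U h \<Longrightarrow> V \<subseteq> U \<Longrightarrow> smooth_on V h"
  unfolding smooth_on_def by (meson differentiable_on_subset)

lemma differentiable_on_cong_open:
  assumes "open U" "\<And>q. q \<in> U \<Longrightarrow> h q = h' q" "h differentiable_on U"
  shows "h' differentiable_on U"
  unfolding differentiable_on_eq_differentiable_at[OF assms(1)] differentiable_def
proof
  fix x assume x: "x \<in> U"
  then obtain D where "(h has_derivative D) (at x)"
    using assms(3) unfolding differentiable_on_eq_differentiable_at[OF assms(1)] differentiable_def
    by blast
  then have "(h' has_derivative D) (at x)"
    by (rule has_derivative_transform_within_open[OF _ assms(1) x]) (simp add: assms(2))
  then show "\<exists>D. (h' has_derivative D) (at x)" by blast
qed

lemma smooth_on_cong_open: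
  assumes "open U" "\<And>q. q \<in> U \<Longrightarrow> h q = h' q" "smooth_on U h"
  shows "smooth_on U h'"
  unfolding smooth_on_def
proof
  fix ks
  show "iter_pd ks h' differentiable_on U"
  proof (rule differentiable_on_cong_open[OF assms(1), of "iter_pd ks h"])
    show "iter_pd ks h differentiable_on U" using assms(3) by (simp add: smooth_on_def)
    show "iter_pd ks h q = iter_pd ks h' q" if "q \<in> U" for q
      by (rule iter_pd_cong_open[OF assms(1)]) (use assms(2) that in auto)
  qed
qed

lemma smooth_on_if_pd_closed:
  assumes U: "open U" and diff: "\<And>h. h \<in> K \<Longrightarrow> h differentiable_on U"
    and pd_closed: "\<And>h k. h \<in> K \<Longrightarrow> \<exists>h'\<in>K. \<forall>q\<in>U. pd k h q = h' q" and h: "h \<in> K"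
  shows "smooth_on U h"
proof -
  have iter: "\<forall>h\<in>K. \<exists>h'\<in>K. \<forall>q\<in>U. iter_pd ks h q = h' q" for ks
  proof (induction ks)
    case Nil
    then show ?case by auto
  next
    case (Cons k ks)
    show ?case
    proof
      fix h0 assume "h0 \<in> K"
      with Cons obtain h1 where h1: "h1 \<in> K" "\<forall>q\<in>U. iter_pd ks h0 q = h1 q" by blast
      then obtain h2 where h2: "h2 \<in> K" "\<forall>q\<in>U. pd k h1 q = h2 q" using pd_closed by blast
      have "\<forall>q\<in>U. iter_pd (k#ks) h0 q = h2 q"
        using h1 h2 pd_cong_open[OF U, of _ "iter_pd ks h0" h1 k] by auto
      then show "\<exists>h'\<in>K. \<forall>q\<in>U. iter_pd (k # ks) h0 q = h' q" using h2 by blast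
    qed
  qed
  show ?thesis unfolding smooth_on_def
  proof
    fix ks
    obtain h' where "h' \<in> K" "\<forall>q\<in>U. iter_pd ks h q = h' q" using h iter by blast
    then show "iter_pd ks h differentiable_on U"
      using differentiable_on_cong_open[OF U, of h' "iter_pd ks h"] diff by auto
  qed
qed

text \<open>Partial derivatives of these expressions are again of this form, which yields all closure
  properties of \<open>smooth_on\<close> at once.\<close>

inductive smooth_expr :: "(real^'n::finite) set \<Rightarrow> (real^'n \<Rightarrow> real) \<Rightarrow> bool" for U where
  smooth: "smooth_on U h \<Longrightarrow> smooth_expr U h"
| const: "smooth_expr U (\<lambda>p. c)"
| add: "smooth_expr U a \<Longrightarrow> smooth_expr U b \<Longrightarrow> smooth_expr U (\<lambda>p. a p + b p)"
| mult: "smooth_expr U a \<Longrightarrow> smooth_expr U b \<Longrightarrow> smooth_expr U (\<lambda>p. a p * b p)"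
| inverse: "smooth_expr U a \<Longrightarrow> (\<forall>p\<in>U. a p \<noteq> 0) \<Longrightarrow> smooth_expr U (\<lambda>p. inverse (a p))"
| exp: "smooth_expr U a \<Longrightarrow> smooth_expr U (\<lambda>p. exp (a p))"

lemma smooth_expr_differentiable:
  assumes U: "open U"
  shows "smooth_expr U h \<Longrightarrow> p \<in> U \<Longrightarrow> h differentiable (at p)"
proof (induction arbitrary: p rule: smooth_expr.induct)
  case (smooth h)
  then show ?case using smooth_on_imp_differentiable_at[OF U] by blast
next
  case (inverse a)
  then show ?case unfolding differentiable_def using Deriv.has_derivative_inverse by blast
next
  case (exp a)
  then show ?case unfolding differentiable_def by (auto intro!: derivative_eq_intros)
qed simp_all

lemma smooth_expr_pd:
  assumes U: "open U"
  shows "smooth_expr U h \<Longrightarrow> \<exists>h'. smooth_expr U h' \<and> (\<forall>p\<in>U. pd k h p = h' p)"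
proof (induction rule: smooth_expr.induct)
  case (smooth h)
  then show ?case using smooth_on_pd smooth_expr.smooth by blast
next
  case (const c)
  then show ?case using pd_const smooth_expr.const by blast
next
  case (add a b)
  then obtain a' b' where ab: "smooth_expr U a'" "smooth_expr U b'"
    "\<forall>p\<in>U. pd k a p = a' p" "\<forall>p\<in>U. pd k b p = b' p" by blast
  have "pd k (\<lambda>q. a q + b q) p = a' p + b' p" if "p \<in> U" for p
    using pd_add[OF smooth_expr_differentiable[OF U add.hyps(1) that]
        smooth_expr_differentiable[OF U add.hyps(2) that]] ab that by simp
  then show ?case using ab by (intro exI[of _ "\<lambda>p. a' p + b' p"]) (auto intro: smooth_expr.add)
next
  case (mult a b)
  then obtain a' b' where ab: "smooth_expr U a'" "smooth_expr U b'"
    "\<forall>p\<in>U. pd k a p = a' p" "\<forall>p\<in>U. pd k b p = b' p" by blast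
  have "pd k (\<lambda>q. a q * b q) p = a' p * b p + a p * b' p" if "p \<in> U" for p
    using pd_mult[OF smooth_expr_differentiable[OF U mult.hyps(1) that]
        smooth_expr_differentiable[OF U mult.hyps(2) that]] ab that by simp
  then show ?case using ab mult.hyps
    by (intro exI[of _ "\<lambda>p. a' p * b p + a p * b' p"]) (auto intro: smooth_expr.add smooth_expr.mult)
next
  case (inverse a)
  then obtain a' where a': "smooth_expr U a'" "\<forall>p\<in>U. pd k a p = a' p" by blast
  have "pd k (\<lambda>q. inverse (a q)) p = (-1) * (inverse (a p) * a' p * inverse (a p))" if "p \<in> U" for p
    using pd_inverse[OF smooth_expr_differentiable[OF U inverse.hyps(1) that]] inverse.hyps a' that
    by simp
  moreover have "smooth_expr U (\<lambda>p. (-1) * (inverse (a p) * a' p * inverse (a p)))"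
    using a' inverse.hyps by (intro smooth_expr.mult smooth_expr.inverse smooth_expr.const) auto
  ultimately show ?case by blast
next
  case (exp a)
  then obtain a' where a': "smooth_expr U a'" "\<forall>p\<in>U. pd k a p = a' p" by blast
  have "pd k (\<lambda>q. exp (a q)) p = exp (a p) * a' p" if "p \<in> U" for p
    using pd_exp[OF smooth_expr_differentiable[OF U exp.hyps(1) that]] a' that by simp
  then show ?case using a' exp.hyps
    by (intro exI[of _ "\<lambda>p. exp (a p) * a' p"]) (auto intro!: smooth_expr.mult smooth_expr.exp)
qed

lemma smooth_expr_smooth_on:
  assumes U: "open U" and "smooth_expr U h"
  shows "smooth_on U h"
proof (rule smooth_on_if_pd_closed[OF U, of "Collect (smooth_expr U)"])
  show "g differentiable_on U" if "g \<in> Collect (smooth_expr U)" for g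
    using smooth_expr_differentiable[OF U] that differentiable_on_eq_differentiable_at[OF U] by blast
  show "\<exists>h'\<in>Collect (smooth_expr U). \<forall>q\<in>U. pd k g q = h' q" if "g \<in> Collect (smooth_expr U)" for g k
    using smooth_expr_pd[OF U] that by blast
qed (use assms in auto)

lemma smooth_on_const: "open U \<Longrightarrow> smooth_on U (\<lambda>p. c)"
  by (rule smooth_expr_smooth_on) (auto intro: smooth_expr.intros)

lemma smooth_on_add:
  "open U \<Longrightarrow> smooth_on U a \<Longrightarrow> smooth_on U b \<Longrightarrow> smooth_on U (\<lambda>p. a p + b p)"
  by (rule smooth_expr_smooth_on) (auto intro: smooth_expr.intros)

lemma smooth_on_mult:
  "open U \<Longrightarrow> smooth_on U a \<Longrightarrow> smooth_on U b \<Longrightarrow> smooth_on U (\<lambda>p. a p * b p)"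
  by (rule smooth_expr_smooth_on) (auto intro: smooth_expr.intros)

lemma smooth_on_cmult: "open U \<Longrightarrow> smooth_on U a \<Longrightarrow> smooth_on U (\<lambda>p. c * a p)"
  by (rule smooth_expr_smooth_on) (auto intro: smooth_expr.intros)

lemma smooth_on_exp: "open U \<Longrightarrow> smooth_on U a \<Longrightarrow> smooth_on U (\<lambda>p. exp (a p))"
  by (rule smooth_expr_smooth_on) (auto intro: smooth_expr.intros)

lemma smooth_on_diff:
  assumes "open U" "smooth_on U a" "smooth_on U b"
  shows "smooth_on U (\<lambda>p. a p - b p)"
proof -
  have "smooth_expr U (\<lambda>p. a p + (-1) * b p)"
    by (intro smooth_expr.add smooth_expr.mult smooth_expr.const smooth_expr.smooth assms(2,3))
  then have "smooth_on U (\<lambda>p. a p + (-1) * b p)" by (rule smooth_expr_smooth_on[OF assms(1)])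
  then show ?thesis by simp
qed

lemma smooth_on_divide:
  assumes "open U" "smooth_on U a" "smooth_on U b" "\<forall>p\<in>U. b p \<noteq> 0"
  shows "smooth_on U (\<lambda>p. a p / b p)"
proof -
  have "smooth_expr U (\<lambda>p. a p * inverse (b p))"
    by (intro smooth_expr.mult smooth_expr.inverse smooth_expr.smooth assms(2-4))
  then have "smooth_on U (\<lambda>p. a p * inverse (b p))" by (rule smooth_expr_smooth_on[OF assms(1)])
  then show ?thesis by (simp add: divide_inverse)
qed

lemma smooth_on_divide_const: "open U \<Longrightarrow> smooth_on U a \<Longrightarrow> smooth_on U (\<lambda>p. a p / c)"
  using smooth_on_cmult[of U a "inverse c"] by (simp add: divide_inverse mult.commute)

lemma smooth_on_sum:
  assumes U: "open U"
  shows "finite A \<Longrightarrow> (\<And>x. x \<in> A \<Longrightarrow> smooth_on U (f x)) \<Longrightarrow> smooth_on U (\<lambda>p. \<Sum>x\<in>A. f x p)"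
proof (induction A rule: finite_induct)
  case (insert x F)
  then show ?case using smooth_on_add[OF U, of "f x"] by simp
qed (simp add: smooth_on_const[OF U])

lemma smooth_on_prod:
  assumes U: "open U"
  shows "finite A \<Longrightarrow> (\<And>x. x \<in> A \<Longrightarrow> smooth_on U (f x)) \<Longrightarrow> smooth_on U (\<lambda>p. \<Prod>x\<in>A. f x p)"
proof (induction A rule: finite_induct)
  case (insert x F)
  then show ?case using smooth_on_mult[OF U, of "f x"] by simp
qed (simp add: smooth_on_const[OF U])

section \<open>Symmetry of second partial derivatives\<close>

lemma has_real_derivative_along_axis:
  assumes "h differentiable (at (q + s *\<^sub>R axis k 1))"
  shows "((\<lambda>s. h (q + s *\<^sub>R axis k 1)) has_real_derivative pd k h (q + s *\<^sub>R axis k 1)) (at s)"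
  using has_real_derivative_along_line[OF assms] sum_times_axis[of "\<lambda>j. pd j h (q + s *\<^sub>R axis k 1)" k]
  by (simp add: mult.commute)

lemma dist_add_two_axes:
  "dist (p + a *\<^sub>R axis i 1 + b *\<^sub>R axis j (1::real)) p \<le> \<bar>a\<bar> + \<bar>b\<bar>"
proof -
  have "dist (p + a *\<^sub>R axis i 1 + b *\<^sub>R axis j (1::real)) p
      = norm (a *\<^sub>R axis i 1 + b *\<^sub>R axis j (1::real))"
    by (simp add: dist_norm algebra_simps)
  also have "\<dots> \<le> norm (a *\<^sub>R axis i (1::real)) + norm (b *\<^sub>R axis j (1::real))"
    by (rule norm_triangle_ineq)
  finally show ?thesis by simp
qed

lemma second_difference_mean_value:
  fixes h :: "real^'n::finite \<Rightarrow> real"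
  assumes U: "open U" and h: "smooth_on U h" and r: "ball p r \<subseteq> U" and t: "0 < t" "2 * t < r"
  shows "\<exists>x. dist x p < 2 * t \<and>
    h (p + t *\<^sub>R axis i 1 + t *\<^sub>R axis j 1) - h (p + t *\<^sub>R axis i 1) - h (p + t *\<^sub>R axis j 1) + h p
      = t^2 * pd j (pd i h) x"
proof -
  let ?ei = "axis i (1::real)" and ?ej = "axis j (1::real)"
  have inU: "p + a *\<^sub>R ?ei + b *\<^sub>R ?ej \<in> U" if "\<bar>a\<bar> \<le> t" "\<bar>b\<bar> \<le> t" for a b
  proof -
    have "dist (p + a *\<^sub>R ?ei + b *\<^sub>R ?ej) p < r"
      using dist_add_two_axes[of p a i b j] that t by linarith
    then show ?thesis using r by (auto simp: dist_commute)
  qed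
  define u where "u s = h ((p + t *\<^sub>R ?ej) + s *\<^sub>R ?ei) - h (p + s *\<^sub>R ?ei)" for s
  have du: "(u has_real_derivative
      (pd i h ((p + t *\<^sub>R ?ej) + s *\<^sub>R ?ei) - pd i h (p + s *\<^sub>R ?ei))) (at s)"
    if "0 \<le> s" "s \<le> t" for s
  proof -
    have "p + t *\<^sub>R ?ej + s *\<^sub>R ?ei \<in> U" using inU[of s t] that t by (simp add: algebra_simps)
    moreover have "p + s *\<^sub>R ?ei \<in> U" using inU[of s 0] that t by simp
    ultimately show ?thesis unfolding u_def
      by (intro DERIV_diff has_real_derivative_along_axis smooth_on_imp_differentiable_at[OF U h])
  qed
  obtain \<xi> where xi: "0 < \<xi>" "\<xi> < t"
    "u t - u 0 = (t - 0) * (pd i h ((p + t *\<^sub>R ?ej) + \<xi> *\<^sub>R ?ei) - pd i h (p + \<xi> *\<^sub>R ?ei))"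
    using MVT2[of 0 t u, OF t(1) du] by auto
  define v where "v s = pd i h ((p + \<xi> *\<^sub>R ?ei) + s *\<^sub>R ?ej)" for s
  have dv: "(v has_real_derivative pd j (pd i h) ((p + \<xi> *\<^sub>R ?ei) + s *\<^sub>R ?ej)) (at s)"
    if "0 \<le> s" "s \<le> t" for s
  proof -
    have "p + \<xi> *\<^sub>R ?ei + s *\<^sub>R ?ej \<in> U" using inU[of \<xi> s] that xi by simp
    then show ?thesis unfolding v_def
      by (intro has_real_derivative_along_axis smooth_on_imp_differentiable_at[OF U smooth_on_pd[OF h]])
  qed
  obtain \<eta> where eta: "0 < \<eta>" "\<eta> < t"
    "v t - v 0 = (t - 0) * pd j (pd i h) ((p + \<xi> *\<^sub>R ?ei) + \<eta> *\<^sub>R ?ej)"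
    using MVT2[of 0 t v, OF t(1) dv] by auto
  have "v t - v 0 = pd i h ((p + t *\<^sub>R ?ej) + \<xi> *\<^sub>R ?ei) - pd i h (p + \<xi> *\<^sub>R ?ei)"
    unfolding v_def by (simp add: algebra_simps)
  then have "u t - u 0 = t^2 * pd j (pd i h) ((p + \<xi> *\<^sub>R ?ei) + \<eta> *\<^sub>R ?ej)"
    using xi(3) eta(3) by (simp add: power2_eq_square)
  moreover have "u t - u 0 = h (p + t *\<^sub>R ?ei + t *\<^sub>R ?ej) - h (p + t *\<^sub>R ?ei) - h (p + t *\<^sub>R ?ej) + h p"
    unfolding u_def by (simp add: algebra_simps)
  moreover have "dist ((p + \<xi> *\<^sub>R ?ei) + \<eta> *\<^sub>R ?ej) p < 2 * t"
    using dist_add_two_axes[of p \<xi> i \<eta> j] xi eta by linarith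
  ultimately show ?thesis by metis
qed

text \<open>The second difference is symmetric in \<open>i\<close> and \<open>j\<close>; letting \<open>t \<rightarrow> 0\<close> with continuity of the
  second partials forces them to agree.\<close>

lemma pd_commute:
  fixes h :: "real^'n::finite \<Rightarrow> real"
  assumes U: "open U" and h: "smooth_on U h" and p: "p \<in> U"
  shows "pd i (pd j h) p = pd j (pd i h) p"
proof (rule ccontr)
  assume ne: "pd i (pd j h) p \<noteq> pd j (pd i h) p"
  obtain r where r: "r > 0" "ball p r \<subseteq> U" using U p open_contains_ball by blast
  define e where "e = \<bar>pd i (pd j h) p - pd j (pd i h) p\<bar> / 2"
  have e: "e > 0" using ne by (simp add: e_def)
  have cont: "continuous (at p) (pd a (pd b h))" for a b
    using smooth_on_imp_differentiable_at[OF U smooth_on_pd[OF smooth_on_pd[OF h]] p]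
      differentiable_imp_continuous_within by blast
  obtain d1 where d1: "d1 > 0" "\<And>x. dist x p < d1 \<Longrightarrow> dist (pd i (pd j h) x) (pd i (pd j h) p) < e"
    using cont e unfolding continuous_at_eps_delta by blast
  obtain d2 where d2: "d2 > 0" "\<And>x. dist x p < d2 \<Longrightarrow> dist (pd j (pd i h) x) (pd j (pd i h) p) < e"
    using cont e unfolding continuous_at_eps_delta by blast
  define t where "t = min r (min d1 d2) / 4"
  have t: "0 < t" "2 * t < r" "2 * t < d1" "2 * t < d2" using r d1 d2 by (auto simp: t_def)
  obtain x where x: "dist x p < 2 * t"
    "h (p + t *\<^sub>R axis i 1 + t *\<^sub>R axis j 1) - h (p + t *\<^sub>R axis i 1) - h (p + t *\<^sub>R axis j 1) + h p
      = t^2 * pd j (pd i h) x"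
    using second_difference_mean_value[OF U h r(2) t(1,2)] by blast
  obtain y where y: "dist y p < 2 * t"
    "h (p + t *\<^sub>R axis j 1 + t *\<^sub>R axis i 1) - h (p + t *\<^sub>R axis j 1) - h (p + t *\<^sub>R axis i 1) + h p
      = t^2 * pd i (pd j h) y"
    using second_difference_mean_value[OF U h r(2) t(1,2), of j i] by blast
  have "t^2 * pd j (pd i h) x = t^2 * pd i (pd j h) y"
    using x(2) y(2) by (simp add: algebra_simps)
  then have xy: "pd j (pd i h) x = pd i (pd j h) y" using t by simp
  have "dist (pd i (pd j h) y) (pd i (pd j h) p) < e" using d1 y t by simp
  moreover have "dist (pd j (pd i h) x) (pd j (pd i h) p) < e" using d2 x t by simp
  ultimately have "\<bar>pd i (pd j h) p - pd j (pd i h) p\<bar> < 2 * e"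
    using xy by (simp add: dist_real_def)
  then show False by (simp add: e_def)
qed

lemma det_scaleR:
  fixes A :: "real^'n::finite^'n"
  shows "det (c *\<^sub>R A) = c ^ CARD('n) * det A"
  by (simp add: det_def prod.distrib sum_distrib_left mult.left_commute)

lemma
  fixes M :: "real^'n::finite^'n"
  assumes "det M \<noteq> 0"
  shows matrix_inv_right: "M ** matrix_inv M = mat 1"
    and matrix_inv_left: "matrix_inv M ** M = mat 1"
proof -
  have "\<exists>A'. M ** A' = mat 1 \<and> A' ** M = mat 1"
    using assms invertible_det_nz unfolding invertible_def by blast
  then have "M ** matrix_inv M = mat 1 \<and> matrix_inv M ** M = mat 1"
    unfolding matrix_inv_def by (rule someI_ex)
  then show "M ** matrix_inv M = mat 1" "matrix_inv M ** M = mat 1" by auto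
qed

lemma matrix_inv_unique:
  fixes M :: "real^'n::finite^'n"
  assumes "det M \<noteq> 0" "B ** M = mat 1"
  shows "matrix_inv M = B"
proof -
  have "matrix_inv M = (B ** M) ** matrix_inv M" by (simp add: assms(2))
  also have "\<dots> = B" by (simp add: matrix_mul_assoc[symmetric] matrix_inv_right[OF assms(1)])
  finally show ?thesis .
qed

lemma symmetric_matrix_inv:
  fixes M :: "real^'n::finite^'n"
  assumes "det M \<noteq> 0" "transpose M = M"
  shows "transpose (matrix_inv M) = matrix_inv M"
proof -
  have "transpose (matrix_inv M) ** M = transpose (M ** matrix_inv M)"
    by (simp add: matrix_transpose_mul assms(2))
  then have "transpose (matrix_inv M) ** M = mat 1"
    by (simp add: matrix_inv_right[OF assms(1)] transpose_mat)
  then show ?thesis using matrix_inv_unique[OF assms(1)] by metis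
qed

lemma matrix_inv_scaleR:
  fixes M :: "real^'n::finite^'n"
  assumes "det M \<noteq> 0" "c \<noteq> 0"
  shows "matrix_inv (c *\<^sub>R M) = inverse c *\<^sub>R matrix_inv M"
proof (rule matrix_inv_unique)
  show "det (c *\<^sub>R M) \<noteq> 0" using assms by (simp add: det_scaleR)
  have "(inverse c *\<^sub>R matrix_inv M) ** (c *\<^sub>R M) = (inverse c * c) *\<^sub>R (matrix_inv M ** M)"
    by (simp add: vec_eq_iff matrix_matrix_mult_def sum_distrib_left algebra_simps)
  then show "(inverse c *\<^sub>R matrix_inv M) ** (c *\<^sub>R M) = mat 1"
    using assms by (simp add: matrix_inv_left)
qed

lemma matrix_inv_cramer:
  fixes M :: "real^'n::finite^'n"
  assumes "det M \<noteq> 0"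
  shows "matrix_inv M $ i $ j = det (\<chi> a c. if c = i then axis j 1 $ a else M $ a $ c) / det M"
proof -
  have "M *v (matrix_inv M *v axis j 1) = axis j 1"
    by (simp add: matrix_vector_mul_assoc matrix_inv_right[OF assms])
  then have "matrix_inv M *v axis j 1
      = (\<chi> k. det (\<chi> a c. if c = k then axis j 1 $ a else M $ a $ c) / det M)"
    using cramer[OF assms] by blast
  moreover have "(matrix_inv M *v axis j 1) $ i = matrix_inv M $ i $ j"
    by (simp add: matrix_vector_mult_basis column_def)
  ultimately show ?thesis by simp
qed

lemma sum_matrix_inv_times_symmetric:
  fixes M :: "real^'n::finite^'n"
  assumes "det M \<noteq> 0" "\<And>i j. M $ i $ j = M $ j $ i"
  shows "(\<Sum>i\<in>UNIV. \<Sum>j\<in>UNIV. matrix_inv M $ i $ j * M $ i $ j) = real CARD('n)"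
proof -
  have "(\<Sum>i\<in>UNIV. \<Sum>j\<in>UNIV. matrix_inv M $ i $ j * M $ i $ j) = trace (matrix_inv M ** M)"
    using assms(2) by (simp add: trace_def matrix_matrix_mult_def)
  then show ?thesis using assms by (simp add: matrix_inv_left trace_I)
qed

lemma sum_matrix_inv_col_symmetric:
  fixes M :: "real^'n::finite^'n"
  assumes "det M \<noteq> 0" "\<And>i j. M $ i $ j = M $ j $ i"
  shows "(\<Sum>i\<in>UNIV. matrix_inv M $ i $ j * M $ i $ k) = (if j = k then 1 else 0)"
proof -
  have "transpose M = M" using assms(2) by (simp add: vec_eq_iff transpose_def)
  then have "matrix_inv M $ i $ j = matrix_inv M $ j $ i" for i
    using arg_cong[OF symmetric_matrix_inv[OF assms(1)], of "\<lambda>A. A $ j $ i"] by (simp add: transpose_def)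
  then have "(\<Sum>i\<in>UNIV. matrix_inv M $ i $ j * M $ i $ k) = (matrix_inv M ** M) $ j $ k"
    by (simp add: matrix_matrix_mult_def)
  then show ?thesis using assms by (simp add: matrix_inv_left mat_def)
qed

lemma smooth_on_det:
  assumes U: "open U" and A: "\<And>a b. smooth_on U (\<lambda>q. A q $ a $ b)"
  shows "smooth_on U (\<lambda>q. det (A q))"
  unfolding det_def
  by (intro smooth_on_sum[OF U] smooth_on_mult[OF U] smooth_on_const[OF U] smooth_on_prod[OF U]
      finite_UNIV A) (simp_all add: finite_permutations)

lemma smooth_on_finv:
  assumes U: "open U" and F: "\<And>i j. smooth_on U (fco F i j)"
    and nondeg: "\<And>p. p \<in> U \<Longrightarrow> det (F p) \<noteq> 0"
  shows "smooth_on U (finv F i j)"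
proof -
  have entries: "smooth_on U (\<lambda>q. F q $ a $ b)" for a b using F[of a b] by (simp add: fco_def[abs_def])
  have "smooth_on U (\<lambda>q. det (\<chi> a c. if c = i then axis j 1 $ a else F q $ a $ c) / det (F q))"
  proof (rule smooth_on_divide[OF U])
    show "smooth_on U (\<lambda>q. det (\<chi> a c. if c = i then axis j 1 $ a else F q $ a $ c))"
    proof (rule smooth_on_det[OF U])
      fix a b
      show "smooth_on U (\<lambda>q. (\<chi> a c. if c = i then axis j 1 $ a else F q $ a $ c) $ a $ b)"
        by (cases "b = i") (simp_all add: smooth_on_const[OF U] entries)
    qed
    show "smooth_on U (\<lambda>q. det (F q))" by (rule smooth_on_det[OF U entries])
  qed (use nondeg in auto)
  then show ?thesis
    by (rule smooth_on_cong_open[OF U, rotated]) (simp add: finv_def matrix_inv_cramer nondeg)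
qed

lemma sum_pd_fco_finv:
  assumes U: "open U" and F: "\<And>i j. smooth_on U (fco F i j)"
    and nondeg: "\<And>p. p \<in> U \<Longrightarrow> det (F p) \<noteq> 0" and p: "p \<in> U"
  shows "(\<Sum>b\<in>UNIV. pd l (fco F a b) p * finv F b j p + fco F a b p * pd l (finv F b j) p) = 0"
proof -
  have diff: "fco F i j differentiable (at p)" "finv F i j differentiable (at p)" for i j
    using smooth_on_imp_differentiable_at[OF U _ p] F smooth_on_finv[OF U F nondeg] by blast+
  have "(\<Sum>b\<in>UNIV. fco F a b q * finv F b j q) = (if a = j then 1 else 0)" if "q \<in> U" for q
    using arg_cong[OF matrix_inv_right[OF nondeg[OF that]], of "\<lambda>M. M $ a $ j"]
    by (simp add: matrix_matrix_mult_def mat_def fco_def finv_def)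
  then have "pd l (\<lambda>q. \<Sum>b\<in>UNIV. fco F a b q * finv F b j q) p = pd l (\<lambda>q. if a = j then 1 else 0) p"
    by (rule pd_cong_open[OF U p])
  then have "pd l (\<lambda>q. \<Sum>b\<in>UNIV. fco F a b q * finv F b j q) p = 0"
    by (simp only: pd_const)
  moreover have "pd l (\<lambda>q. \<Sum>b\<in>UNIV. fco F a b q * finv F b j q) p
      = (\<Sum>b\<in>UNIV. pd l (\<lambda>q. fco F a b q * finv F b j q) p)"
    by (rule pd_sum) (auto intro!: differentiable_mult diff)
  moreover have "\<dots> = (\<Sum>b\<in>UNIV. pd l (fco F a b) p * finv F b j p + fco F a b p * pd l (finv F b j) p)"
    by (rule sum.cong) (auto intro!: pd_mult diff)
  ultimately show ?thesis by simp
qed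

lemma pd_finv:
  assumes U: "open U" and F: "\<And>i j. smooth_on U (fco F i j)"
    and nondeg: "\<And>p. p \<in> U \<Longrightarrow> det (F p) \<noteq> 0" and p: "p \<in> U"
  shows "(\<chi> i j. pd l (finv F i j) p)
    = - (matrix_inv (F p) ** (\<chi> i j. pd l (fco F i j) p) ** matrix_inv (F p))"
proof -
  define dF where "dF = (\<chi> i j. pd l (fco F i j) p)"
  define dI where "dI = (\<chi> i j. pd l (finv F i j) p)"
  define I where "I = matrix_inv (F p)"
  have eq: "dF ** I + F p ** dI = 0"
    using sum_pd_fco_finv[OF U F nondeg p]
    by (simp add: vec_eq_iff matrix_matrix_mult_def dF_def dI_def I_def fco_def finv_def sum.distrib)
  have "I ** (dF ** I) + I ** (F p ** dI) = 0"
    using arg_cong[OF eq, of "\<lambda>X. I ** X"] by (simp add: matrix_add_ldistrib)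
  moreover have "I ** (F p ** dI) = dI"
    by (simp add: matrix_mul_assoc I_def matrix_inv_left[OF nondeg[OF p]])
  ultimately have "dI = - (I ** (dF ** I))" by (simp add: eq_neg_iff_add_eq_0 add.commute)
  then show ?thesis by (simp add: dF_def dI_def I_def matrix_mul_assoc)
qed

section \<open>The Poincar\'e lemma on a ball\<close>

definition radial_integrand :: "('n::finite \<Rightarrow> real^'n \<Rightarrow> real) \<Rightarrow> real^'n \<Rightarrow> real^'n \<Rightarrow> real \<Rightarrow> real"
  where "radial_integrand w p0 x t = (\<Sum>i\<in>UNIV. w i (p0 + t *\<^sub>R (x - p0)) * (x - p0)$i)"

definition radial_coeff ::
    "('n::finite \<Rightarrow> real^'n \<Rightarrow> real) \<Rightarrow> real^'n \<Rightarrow> 'n \<Rightarrow> real^'n \<Rightarrow> real \<Rightarrow> real"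
  where "radial_coeff w p0 k x t = w k (p0 + t *\<^sub>R (x - p0))
    + t * (\<Sum>i\<in>UNIV. pd k (w i) (p0 + t *\<^sub>R (x - p0)) * (x - p0)$i)"

lemma radial_point_in_ball:
  fixes x p0 :: "'a::real_normed_vector"
  assumes "x \<in> ball p0 r" "0 \<le> t" "t \<le> 1"
  shows "p0 + t *\<^sub>R (x - p0) \<in> ball p0 r"
proof -
  have "dist p0 (p0 + t *\<^sub>R (x - p0)) = \<bar>t\<bar> * norm (x - p0)" by (simp add: dist_norm)
  also have "\<dots> \<le> norm (x - p0)" using assms by (auto intro: mult_left_le_one_le)
  also have "\<dots> < r" using assms by (simp add: dist_norm norm_minus_commute)
  finally show ?thesis by simp
qed

lemma has_derivative_radial_integrand:
  assumes "\<And>i. w i differentiable (at (p0 + t *\<^sub>R (x - p0)))"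
  shows "((\<lambda>x. radial_integrand w p0 x t)
    has_derivative (\<lambda>v. \<Sum>k\<in>UNIV. radial_coeff w p0 k x t * v$k)) (at x)"
proof -
  let ?y = "p0 + t *\<^sub>R (x - p0)"
  have dy: "((\<lambda>x. p0 + t *\<^sub>R (x - p0)) has_derivative (\<lambda>v. t *\<^sub>R v)) (at x)"
    by (auto intro!: derivative_eq_intros simp: algebra_simps)
  have dw: "((\<lambda>x. w i (p0 + t *\<^sub>R (x - p0))) has_derivative (\<lambda>v. \<Sum>k\<in>UNIV. (t *\<^sub>R v)$k * pd k (w i) ?y))
      (at x)" for i
    using has_derivative_compose[OF dy has_derivative_pd_expansion[OF assms]] by (simp add: o_def)
  have dc: "((\<lambda>x. (x - p0)$i) has_derivative (\<lambda>v. v$i)) (at x)" for i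
  proof -
    have "((\<lambda>x. x - p0) has_derivative (\<lambda>v. v)) (at x)" by (auto intro!: derivative_eq_intros)
    then show ?thesis using bounded_linear.has_derivative[OF bounded_linear_vec_nth] by blast
  qed
  have "((\<lambda>x. radial_integrand w p0 x t) has_derivative (\<lambda>v. \<Sum>i\<in>UNIV.
      w i ?y * v$i + (\<Sum>k\<in>UNIV. (t *\<^sub>R v)$k * pd k (w i) ?y) * (x - p0)$i)) (at x)"
    unfolding radial_integrand_def by (intro has_derivative_sum has_derivative_mult dw dc)
  moreover have "(\<Sum>i\<in>UNIV. w i ?y * v$i + (\<Sum>k\<in>UNIV. (t *\<^sub>R v)$k * pd k (w i) ?y) * (x - p0)$i)
      = (\<Sum>k\<in>UNIV. radial_coeff w p0 k x t * v$k)" for v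
  proof -
    have "(\<Sum>i\<in>UNIV. (\<Sum>k\<in>UNIV. (t *\<^sub>R v)$k * pd k (w i) ?y) * (x - p0)$i)
        = (\<Sum>k\<in>UNIV. \<Sum>i\<in>UNIV. t * v$k * pd k (w i) ?y * (x - p0)$i)"
      by (subst sum.swap) (simp add: sum_distrib_right mult.assoc)
    also have "\<dots> = (\<Sum>k\<in>UNIV. t * (\<Sum>i\<in>UNIV. pd k (w i) ?y * (x - p0)$i) * v$k)"
      by (simp add: sum_distrib_left sum_distrib_right algebra_simps)
    finally have "(\<Sum>i\<in>UNIV. (\<Sum>k\<in>UNIV. (t *\<^sub>R v)$k * pd k (w i) ?y) * (x - p0)$i)
        = (\<Sum>k\<in>UNIV. t * (\<Sum>i\<in>UNIV. pd k (w i) ?y * (x - p0)$i) * v$k)" .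
    then show ?thesis
      by (simp add: radial_coeff_def sum.distrib distrib_right)
  qed
  ultimately show ?thesis by simp
qed

lemma continuous_on_radial_coeff:
  fixes w :: "'n::finite \<Rightarrow> real^'n \<Rightarrow> real"
  assumes smooth_w: "\<And>i. smooth_on (ball p0 r) (w i)"
  shows "continuous_on (ball p0 r \<times> cbox 0 1) (\<lambda>(x, t). radial_coeff w p0 k x t)"
proof -
  let ?y = "\<lambda>(x, t). p0 + t *\<^sub>R (x - p0)"
  have y: "continuous_on (ball p0 r \<times> cbox 0 1) ?y"
    by (auto intro!: continuous_intros simp: split_beta)
  have img: "?y ` (ball p0 r \<times> cbox 0 1) \<subseteq> ball p0 r"
    using radial_point_in_ball by auto
  have cont: "continuous_on (ball p0 r \<times> cbox 0 1) (\<lambda>z. h (?y z))" if "smooth_on (ball p0 r) h" for h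
  proof -
    have "continuous_on (ball p0 r) h"
      using smooth_on_imp_differentiable_on[OF that] differentiable_imp_continuous_on by blast
    then show ?thesis using continuous_on_compose2[OF _ y img] by blast
  qed
  have "continuous_on (ball p0 r \<times> cbox 0 1) (\<lambda>z. w k (?y z))"
    by (rule cont[OF smooth_w])
  moreover have "continuous_on (ball p0 r \<times> cbox 0 1) (\<lambda>z. pd k (w i) (?y z))" for i
    by (rule cont[OF smooth_on_pd[OF smooth_w]])
  ultimately show ?thesis
    unfolding radial_coeff_def split_beta by (intro continuous_intros) (auto simp: split_beta)
qed

definition radial_diff :: "('n::finite \<Rightarrow> real^'n \<Rightarrow> real) \<Rightarrow> real^'n \<Rightarrow> real^'n \<Rightarrow> real \<Rightarrow> (real^'n) \<Rightarrow>\<^sub>L real"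
  where "radial_diff w p0 x t = (\<Sum>k\<in>UNIV. radial_coeff w p0 k x t *\<^sub>R Blinfun (\<lambda>v. v $ k))"

lemma blinfun_apply_radial_diff:
  "blinfun_apply (radial_diff w p0 x t) = (\<lambda>v. \<Sum>k\<in>UNIV. radial_coeff w p0 k x t * v$k)"
  by (rule ext) (simp add: radial_diff_def blinfun.sum_left blinfun.scaleR_left
      bounded_linear_Blinfun_apply bounded_linear_vec_nth)

lemma continuous_on_radial_diff:
  assumes "\<And>i. smooth_on (ball p0 r) (w i)"
  shows "continuous_on (ball p0 r \<times> cbox 0 1) (\<lambda>(x, t). radial_diff w p0 x t)"
  unfolding radial_diff_def split_beta
  using continuous_on_radial_coeff[OF assms] by (auto intro!: continuous_intros simp: split_beta)

lemma radial_integrand_integrable: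
  assumes smooth_w: "\<And>i. smooth_on (ball p0 r) (w i)" and x: "x \<in> ball p0 r"
  shows "radial_integrand w p0 x integrable_on cbox 0 1"
proof (rule integrable_continuous)
  have "continuous_on (cbox 0 1) (\<lambda>t. w i (p0 + t *\<^sub>R (x - p0)))" for i
  proof (rule continuous_on_compose2[of "ball p0 r" "w i"])
    show "continuous_on (ball p0 r) (w i)"
      using smooth_on_imp_differentiable_on[OF smooth_w] differentiable_imp_continuous_on by blast
    show "(\<lambda>t. p0 + t *\<^sub>R (x - p0)) ` cbox 0 1 \<subseteq> ball p0 r"
      using radial_point_in_ball[of x p0 r] x by auto
  qed (intro continuous_intros)
  then show "continuous_on (cbox 0 1) (radial_integrand w p0 x)"
    unfolding radial_integrand_def by (intro continuous_intros)
qed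

lemma has_derivative_radial_integral:
  assumes smooth_w: "\<And>i. smooth_on (ball p0 r) (w i)" and x: "x \<in> ball p0 r"
  shows "((\<lambda>x. integral (cbox 0 1) (radial_integrand w p0 x))
    has_derivative integral (cbox 0 1) (radial_diff w p0 x)) (at x)"
proof -
  have "((\<lambda>x. integral (cbox 0 1) (radial_integrand w p0 x))
      has_derivative integral (cbox 0 1) (radial_diff w p0 x)) (at x within ball p0 r)"
  proof (rule leibniz_rule[OF _ radial_integrand_integrable[OF smooth_w] continuous_on_radial_diff[OF smooth_w]
        x convex_ball])
    fix x and t :: real assume "x \<in> ball p0 r" "t \<in> cbox 0 1"
    then have "p0 + t *\<^sub>R (x - p0) \<in> ball p0 r"
      using radial_point_in_ball[of x p0 r t] by simp
    then have "w i differentiable (at (p0 + t *\<^sub>R (x - p0)))" for i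
      by (rule smooth_on_imp_differentiable_at[OF open_ball smooth_w])
    then have "((\<lambda>x. radial_integrand w p0 x t) has_derivative blinfun_apply (radial_diff w p0 x t)) (at x)"
      unfolding blinfun_apply_radial_diff by (rule has_derivative_radial_integrand)
    then show "((\<lambda>x. radial_integrand w p0 x t) has_derivative blinfun_apply (radial_diff w p0 x t))
        (at x within ball p0 r)"
      by (rule has_derivative_at_withinI)
  qed
  then show ?thesis using at_within_open[OF x] by simp
qed

context
  fixes w :: "'n::finite \<Rightarrow> real^'n \<Rightarrow> real" and p0 :: "real^'n" and r :: real
  assumes smooth_w: "\<And>i. smooth_on (ball p0 r) (w i)"
    and closed_w: "\<And>p i j. p \<in> ball p0 r \<Longrightarrow> pd j (w i) p = pd i (w j) p"
begin

text \<open>Closedness turns the integrand into the derivative of \<open>t \<mapsto> t w\<^sub>k(p\<^sub>0 + t(x - p\<^sub>0))\<close>.\<close>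

lemma radial_coeff_has_integral:
  assumes x: "x \<in> ball p0 r"
  shows "(radial_coeff w p0 k x has_integral w k x) (cbox 0 1)"
proof -
  define g where "g t = t * w k (p0 + t *\<^sub>R (x - p0))" for t
  have "(g has_vector_derivative radial_coeff w p0 k x t) (at t within {0..1})"
    if t: "t \<in> {0..1}" for t
  proof -
    let ?y = "p0 + t *\<^sub>R (x - p0)"
    have y: "?y \<in> ball p0 r" using radial_point_in_ball[OF x] t by auto
    have "((\<lambda>t. w k (p0 + t *\<^sub>R (x - p0))) has_real_derivative
        (\<Sum>j\<in>UNIV. (x - p0)$j * pd j (w k) ?y)) (at t)"
      by (rule has_real_derivative_along_line)
        (rule smooth_on_imp_differentiable_at[OF _ smooth_w y], simp)
    then have "(g has_real_derivative (1 * w k ?y + (\<Sum>j\<in>UNIV. (x - p0)$j * pd j (w k) ?y) * t)) (at t)"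
      unfolding g_def by (rule DERIV_mult[OF DERIV_ident])
    moreover have "(\<Sum>j\<in>UNIV. (x - p0)$j * pd j (w k) ?y) = (\<Sum>i\<in>UNIV. pd k (w i) ?y * (x - p0)$i)"
      using closed_w[OF y] by (simp add: mult.commute)
    ultimately have "(g has_real_derivative radial_coeff w p0 k x t) (at t)"
      by (simp add: radial_coeff_def mult.commute[of t])
    then show ?thesis
      using has_real_derivative_iff_has_vector_derivative has_field_derivative_at_within by blast
  qed
  then have "(radial_coeff w p0 k x has_integral (g 1 - g 0)) {0..1}"
    by (intro fundamental_theorem_of_calculus) auto
  then show ?thesis by (simp add: g_def)
qed

lemma has_derivative_radial_potential:
  assumes x: "x \<in> ball p0 r"
  shows "((\<lambda>x. integral (cbox 0 1) (radial_integrand w p0 x))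
    has_derivative (\<lambda>v. \<Sum>k\<in>UNIV. w k x * v$k)) (at x)"
proof -
  have "continuous_on (cbox 0 1) (\<lambda>t. (\<lambda>(x, t). radial_diff w p0 x t) (x, t))"
    by (rule continuous_on_compose2[OF continuous_on_radial_diff[where w = w, OF smooth_w]])
      (use x in \<open>auto intro!: continuous_intros\<close>)
  then have cont: "continuous_on (cbox 0 1) (radial_diff w p0 x)" by simp
  have "blinfun_apply (integral (cbox 0 1) (radial_diff w p0 x)) v = (\<Sum>k\<in>UNIV. w k x * v$k)" for v
  proof -
    have "blinfun_apply (integral (cbox 0 1) (radial_diff w p0 x)) v
        = integral (cbox 0 1) (\<lambda>t. blinfun_apply (radial_diff w p0 x t) v)"
      using cont by (intro blinfun_apply_integral integrable_continuous)
    also have "\<dots> = (\<Sum>k\<in>UNIV. w k x * v$k)"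
      unfolding blinfun_apply_radial_diff
      by (intro integral_unique has_integral_sum has_integral_mult_left radial_coeff_has_integral x)
        simp
    finally show ?thesis .
  qed
  then have "blinfun_apply (integral (cbox 0 1) (radial_diff w p0 x)) = (\<lambda>v. \<Sum>k\<in>UNIV. w k x * v$k)"
    by (rule ext)
  then show ?thesis using has_derivative_radial_integral[where w = w, OF smooth_w x] by simp
qed

lemma poincare_lemma_ball:
  "\<exists>\<sigma>. smooth_on (ball p0 r) \<sigma> \<and> (\<forall>p\<in>ball p0 r. \<forall>i. pd i \<sigma> p = w i p)"
proof -
  define \<sigma> where "\<sigma> x = integral (cbox 0 1) (radial_integrand w p0 x)" for x
  have D: "(\<sigma> has_derivative (\<lambda>v. \<Sum>k\<in>UNIV. w k x * v$k)) (at x)" if "x \<in> ball p0 r" for x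
    unfolding \<sigma>_def by (rule has_derivative_radial_potential[OF that])
  have pd_\<sigma>: "pd k \<sigma> x = w k x" if "x \<in> ball p0 r" for k x
    using pd_has_derivative[OF D[OF that]] sum_times_axis[of "\<lambda>j. w j x" k] by (simp add: mult.commute)
  have "smooth_on (ball p0 r) \<sigma>"
  proof (rule smooth_on_if_pd_closed[OF open_ball, of "insert \<sigma> {h. smooth_on (ball p0 r) h}"])
    fix h k assume h: "h \<in> insert \<sigma> {h. smooth_on (ball p0 r) h}"
    have "\<sigma> differentiable_on ball p0 r"
      using D unfolding differentiable_on_eq_differentiable_at[OF open_ball] differentiable_def by blast
    then show "h differentiable_on ball p0 r"
      using h smooth_on_imp_differentiable_on by blast
    show "\<exists>h'\<in>insert \<sigma> {h. smooth_on (ball p0 r) h}. \<forall>q\<in>ball p0 r. pd k h q = h' q"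
    proof (cases "h = \<sigma>")
      case True
      then show ?thesis using pd_\<sigma> smooth_w by (intro bexI[of _ "w k"]) auto
    next
      case False
      then show ?thesis using h smooth_on_pd by (intro bexI[of _ "pd k h"]) auto
    qed
  qed simp
  then show ?thesis using pd_\<sigma> by blast
qed

end

lemma hessian_potential_ball:
  fixes H :: "'n::finite \<Rightarrow> 'n \<Rightarrow> real^'n \<Rightarrow> real"
  assumes smooth: "\<And>i j. smooth_on (ball p0 r) (H i j)"
    and symm: "\<And>p i j. p \<in> ball p0 r \<Longrightarrow> H i j p = H j i p"
    and codazzi: "\<And>p i j k. p \<in> ball p0 r \<Longrightarrow> pd k (H i j) p = pd j (H i k) p"
  shows "\<exists>g. smooth_on (ball p0 r) g \<and> (\<forall>p\<in>ball p0 r. \<forall>i j. pd i (pd j g) p = H i j p)"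
proof -
  have "\<exists>\<sigma>. smooth_on (ball p0 r) \<sigma> \<and> (\<forall>p\<in>ball p0 r. \<forall>j. pd j \<sigma> p = H i j p)" for i
    using poincare_lemma_ball[where w = "H i"] smooth codazzi by blast
  then obtain \<sigma> where \<sigma>: "\<And>i. smooth_on (ball p0 r) (\<sigma> i)"
    "\<And>p i j. p \<in> ball p0 r \<Longrightarrow> pd j (\<sigma> i) p = H i j p"
    by metis
  then have "\<exists>g. smooth_on (ball p0 r) g \<and> (\<forall>p\<in>ball p0 r. \<forall>i. pd i g p = \<sigma> i p)"
    using poincare_lemma_ball[where w = \<sigma>] symm by metis
  then obtain g where g: "smooth_on (ball p0 r) g" "\<And>p i. p \<in> ball p0 r \<Longrightarrow> pd i g p = \<sigma> i p"
    by blast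
  have "pd i (pd j g) p = H i j p" if "p \<in> ball p0 r" for p i j
  proof -
    have "pd i (pd j g) p = pd i (\<sigma> j) p" by (rule pd_cong_open[OF open_ball that]) (use g in simp)
    then show ?thesis using \<sigma>(2)[OF that] symm[OF that] by simp
  qed
  then show ?thesis using g by blast
qed

section \<open>The traces \<open>X\<^sub>k = f\<^sup>i\<^sup>j \<partial>\<^sub>k f\<^sub>i\<^sub>j\<close> and \<open>Y\<^sub>k = f\<^sup>i\<^sup>j \<partial>\<^sub>j f\<^sub>i\<^sub>k\<close>\<close>

definition trace_dF :: "(real^'n \<Rightarrow> real^'n^'n) \<Rightarrow> 'n::finite \<Rightarrow> real^'n \<Rightarrow> real" where
  "trace_dF F k p = (\<Sum>i\<in>UNIV. \<Sum>j\<in>UNIV. finv F i j p * pd k (fco F i j) p)"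

definition contract_dF :: "(real^'n \<Rightarrow> real^'n^'n) \<Rightarrow> 'n::finite \<Rightarrow> real^'n \<Rightarrow> real" where
  "contract_dF F k p = (\<Sum>i\<in>UNIV. \<Sum>j\<in>UNIV. finv F i j p * pd j (fco F i k) p)"

lemma smooth_on_trace_dF:
  assumes U: "open U" and F: "\<And>i j. smooth_on U (fco F i j)"
    and nondeg: "\<And>p. p \<in> U \<Longrightarrow> det (F p) \<noteq> 0"
  shows "smooth_on U (trace_dF F k)"
  unfolding trace_dF_def
  by (intro smooth_on_sum[OF U] smooth_on_mult[OF U] smooth_on_finv[OF U F nondeg] smooth_on_pd F) auto

lemma sum_sandwich_symmetric:
  fixes I A B :: "real^'n::finite^'n"
  assumes "transpose A = A" "transpose B = B"
  shows "(\<Sum>i\<in>UNIV. \<Sum>j\<in>UNIV. (I ** A ** I) $ i $ j * B $ i $ j)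
    = (\<Sum>i\<in>UNIV. \<Sum>j\<in>UNIV. (I ** B ** I) $ i $ j * A $ i $ j)"
proof -
  have frob: "(\<Sum>i\<in>UNIV. \<Sum>j\<in>UNIV. X $ i $ j * Y $ i $ j) = trace (X ** transpose Y)"
    for X Y :: "real^'n^'n"
    by (simp add: trace_def matrix_matrix_mult_def transpose_def)
  have "trace ((I ** A ** I) ** B) = trace ((I ** A) ** (I ** B))"
    by (simp add: matrix_mul_assoc)
  also have "\<dots> = trace ((I ** B) ** (I ** A))" by (rule trace_mul_sym)
  also have "\<dots> = trace ((I ** B ** I) ** A)" by (simp add: matrix_mul_assoc)
  finally show ?thesis unfolding frob assms .
qed

lemma pd_trace_dF:
  assumes U: "open U" and F: "\<And>i j. smooth_on U (fco F i j)"
    and nondeg: "\<And>p. p \<in> U \<Longrightarrow> det (F p) \<noteq> 0" and p: "p \<in> U"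
  shows "pd l (trace_dF F k) p
    = - (\<Sum>i\<in>UNIV. \<Sum>j\<in>UNIV. (matrix_inv (F p) ** (\<chi> i j. pd l (fco F i j) p) ** matrix_inv (F p)) $ i $ j
          * pd k (fco F i j) p)
      + (\<Sum>i\<in>UNIV. \<Sum>j\<in>UNIV. finv F i j p * pd l (pd k (fco F i j)) p)"
proof -
  have diff: "finv F i j differentiable (at p)" "pd k (fco F i j) differentiable (at p)" for i j
    using smooth_on_imp_differentiable_at[OF U _ p] smooth_on_finv[OF U F nondeg] smooth_on_pd F by blast+
  have "pd l (trace_dF F k) p = (\<Sum>i\<in>UNIV. \<Sum>j\<in>UNIV. pd l (\<lambda>q. finv F i j q * pd k (fco F i j) q) p)"
    unfolding trace_dF_def using diff by (simp add: pd_sum differentiable_sum differentiable_mult)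
  also have "\<dots> = (\<Sum>i\<in>UNIV. \<Sum>j\<in>UNIV. pd l (finv F i j) p * pd k (fco F i j) p
                    + finv F i j p * pd l (pd k (fco F i j)) p)"
    by (intro sum.cong refl pd_mult diff)
  also have "\<dots> = (\<Sum>i\<in>UNIV. \<Sum>j\<in>UNIV. (\<chi> i j. pd l (finv F i j) p) $ i $ j * pd k (fco F i j) p)
                 + (\<Sum>i\<in>UNIV. \<Sum>j\<in>UNIV. finv F i j p * pd l (pd k (fco F i j)) p)"
    by (simp add: sum.distrib)
  finally show ?thesis by (simp add: pd_finv[OF U F nondeg p] sum_negf)
qed

text \<open>In \<open>\<partial>\<^sub>l X\<^sub>k = - tr(F\<inverse> \<partial>\<^sub>l F F\<inverse> \<partial>\<^sub>k F) + tr(F\<inverse> \<partial>\<^sub>l \<partial>\<^sub>k F)\<close> both terms are symmetric in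
  \<open>k, l\<close>.  (By Jacobi's formula \<open>X\<^sub>k = \<partial>\<^sub>k log \<bar>det F\<bar>\<close>.)\<close>

lemma trace_dF_closed:
  assumes U: "open U" and F: "\<And>i j. smooth_on U (fco F i j)"
    and nondeg: "\<And>p. p \<in> U \<Longrightarrow> det (F p) \<noteq> 0"
    and symm: "\<And>p i j. p \<in> U \<Longrightarrow> F p $ i $ j = F p $ j $ i" and p: "p \<in> U"
  shows "pd l (trace_dF F k) p = pd k (trace_dF F l) p"
proof -
  define D where "D k = (\<chi> i j. pd k (fco F i j) p)" for k
  have symD: "transpose (D k) = D k" for k
  proof -
    have "pd k (fco F j i) p = pd k (fco F i j) p" for i j
      by (rule pd_cong_open[OF U p]) (simp add: fco_def symm)
    then show ?thesis by (simp add: vec_eq_iff transpose_def D_def)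
  qed
  have "pd l (pd k (fco F i j)) p = pd k (pd l (fco F i j)) p" for i j
    by (rule pd_commute[OF U F p])
  then show ?thesis
    using sum_sandwich_symmetric[OF symD symD, of "matrix_inv (F p)" l k]
    by (simp add: pd_trace_dF[OF U F nondeg p] D_def)
qed

lemma double_sum_divide_diff:
  fixes f a b :: "'a \<Rightarrow> 'b \<Rightarrow> real"
  shows "(\<Sum>i\<in>A. \<Sum>j\<in>B. f i j / d * (u * a i j - v * b i j))
     = (u * (\<Sum>i\<in>A. \<Sum>j\<in>B. f i j * a i j) - v * (\<Sum>i\<in>A. \<Sum>j\<in>B. f i j * b i j)) / d"
proof -
  have "(\<Sum>i\<in>A. \<Sum>j\<in>B. f i j / d * (u * a i j - v * b i j))
     = (\<Sum>i\<in>A. \<Sum>j\<in>B. (u * (f i j * a i j) - v * (f i j * b i j))) / d"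
    unfolding sum_divide_distrib by (intro sum.cong refl) (simp add: diff_divide_distrib algebra_simps)
  then show ?thesis by (simp add: sum_subtractf sum_distrib_left)
qed

lemma s_cov_eq:
  fixes F :: "real^'n::finite \<Rightarrow> real^'n^'n"
  shows "s_cov F k p = (trace_dF F k p - real CARD('n) * contract_dF F k p)
    / ((real CARD('n) + 2) * (1 - real CARD('n)))"
  using double_sum_divide_diff[of "\<lambda>i j. finv F i j p" "(real CARD('n) + 2) * (1 - real CARD('n))" 1
      "\<lambda>i j. pd k (fco F i j) p" "real CARD('n)" "\<lambda>i j. pd j (fco F i k) p" UNIV UNIV]
  by (simp add: s_cov_def trace_dF_def contract_dF_def)

lemma c_cov_eq:
  fixes F :: "real^'n::finite \<Rightarrow> real^'n^'n"
  shows "c_cov F k p = ((real CARD('n) + 3) * trace_dF F k p - 2 * (real CARD('n) + 1) * contract_dF F k p)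
    / ((real CARD('n) + 2) * (real CARD('n) - 1))"
  using double_sum_divide_diff[of "\<lambda>i j. finv F i j p" "(real CARD('n) + 2) * (real CARD('n) - 1)"
      "real CARD('n) + 3" "\<lambda>i j. pd k (fco F i j) p" "2 * (real CARD('n) + 1)"
      "\<lambda>i j. pd j (fco F i k) p" UNIV UNIV]
  by (simp add: c_cov_def trace_dF_def contract_dF_def mult.assoc)

lemma c_cov_plus_s_cov:
  fixes F :: "real^'n::finite \<Rightarrow> real^'n^'n"
  assumes "CARD('n) \<ge> 2"
  shows "c_cov F k p + s_cov F k p
    = (trace_dF F k p - (real CARD('n) + 2) * s_cov F k p) / real CARD('n)"
proof -
  define n where "n = real CARD('n)"
  define d where "d = (n + 2) * (n - 1)"
  have d: "d \<noteq> 0" "n \<noteq> 0" using assms by (auto simp: n_def d_def)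
  have "((n + 3) * X - 2 * (n + 1) * Y) / d + (X - n * Y) / (- d)
      = (X - (n + 2) * ((X - n * Y) / (- d))) / n" for X Y
    using d by (simp add: field_simps) (simp add: d_def algebra_simps)
  moreover have "(n + 2) * (1 - n) = - d" by (simp add: d_def algebra_simps)
  ultimately show ?thesis
    unfolding s_cov_eq c_cov_eq n_def[symmetric] d_def[symmetric] by simp
qed

lemma smooth_on_s_cov:
  assumes U: "open U" and F: "\<And>i j. smooth_on U (fco F i j)"
    and nondeg: "\<And>p. p \<in> U \<Longrightarrow> det (F p) \<noteq> 0"
  shows "smooth_on U (s_cov F k)"
  unfolding s_cov_def[abs_def]
  by (intro smooth_on_sum[OF U] smooth_on_mult[OF U] smooth_on_divide_const[OF U] smooth_on_finv[OF U F nondeg]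
      smooth_on_diff[OF U] smooth_on_cmult[OF U] smooth_on_pd F) auto

lemma covariants_cong_open:
  assumes V: "open V" "p \<in> V" and FG: "\<And>q. q \<in> V \<Longrightarrow> F q = G q"
  shows "s_cov F k p = s_cov G k p" and "c_cov F k p = c_cov G k p"
    and "a_ten F i j k p = a_ten G i j k p"
proof -
  have "pd l (fco F a b) p = pd l (fco G a b) p" for l a b
    by (rule pd_cong_open[OF V]) (simp add: fco_def FG)
  moreover have "fco F a b p = fco G a b p" "finv F a b p = finv G a b p" for a b
    using FG[OF V(2)] by (simp_all add: fco_def finv_def)
  ultimately show "s_cov F k p = s_cov G k p" "c_cov F k p = c_cov G k p"
    "a_ten F i j k p = a_ten G i j k p"
    by (simp_all add: s_cov_def c_cov_def a_ten_def)
qed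

section \<open>Rescaling the equation\<close>

lemma fco_scaleR: "fco (\<lambda>q. \<phi> q *\<^sub>R F q) i j = (\<lambda>q. \<phi> q * fco F i j q)"
  by (simp add: fco_def fun_eq_iff)

lemma finv_scaleR:
  assumes "det (F p) \<noteq> 0" "\<phi> p \<noteq> 0"
  shows "finv (\<lambda>q. \<phi> q *\<^sub>R F q) i j p = finv F i j p / \<phi> p"
  using matrix_inv_scaleR[OF assms] by (simp add: finv_def divide_inverse mult.commute)

lemma pd_fco_scaleR:
  assumes "\<phi> differentiable (at p)" "fco F i j differentiable (at p)"
  shows "pd k (fco (\<lambda>q. \<phi> q *\<^sub>R F q) i j) p = pd k \<phi> p * fco F i j p + \<phi> p * pd k (fco F i j) p"
  unfolding fco_scaleR by (rule pd_mult[OF assms])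

lemma differentiable_at_factor:
  fixes \<phi> g h :: "'a::real_normed_vector \<Rightarrow> real"
  assumes V: "open V" "q \<in> V" and h: "\<And>z. z \<in> V \<Longrightarrow> h z = \<phi> z * g z"
    and diff: "h differentiable (at q)" "g differentiable (at q)" and g: "g q \<noteq> 0"
  shows "\<phi> differentiable (at q)"
proof -
  obtain e1 where e1: "e1 > 0" "\<And>z. dist q z < e1 \<Longrightarrow> g z \<noteq> 0"
    using continuous_at_avoid[OF differentiable_imp_continuous_within[OF diff(2)] g] by blast
  obtain e2 where e2: "e2 > 0" "ball q e2 \<subseteq> V" using V open_contains_ball by blast
  have "(\<lambda>z. h z / g z) differentiable (at q)" using diff g by simp
  then show ?thesis
  proof (rule differentiable_transform_within[of _ _ _ "min e1 e2"])
    show "h z / g z = \<phi> z" if "dist z q < min e1 e2" for z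
      using that e1(2)[of z] e2(2) h[of z] by (auto simp: dist_commute)
  qed (use e1 e2 in auto)
qed

lemma scale_factor_differentiable:
  assumes V: "open V" "q \<in> V" and FG: "\<And>z. z \<in> V \<Longrightarrow> F z = \<phi> z *\<^sub>R G z"
    and dG: "\<And>i j. fco G i j differentiable (at q)" and nondeg: "det (G q) \<noteq> 0"
    and dF: "\<And>i j. fco F i j differentiable (at q)"
  shows "\<phi> differentiable (at q)"
proof -
  have "G q \<noteq> 0" using nondeg det_0 mat_0 by metis
  then obtain a b where ab: "G q $ a $ b \<noteq> 0" by (auto simp: vec_eq_iff)
  show ?thesis
    by (rule differentiable_at_factor[OF V, of "fco F a b" _ "fco G a b"])
      (use FG ab dG dF in \<open>simp_all add: fco_def\<close>)
qed

context
  fixes F :: "real^'n::finite \<Rightarrow> real^'n^'n" and \<phi> :: "real^'n \<Rightarrow> real" and p :: "real^'n"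
  assumes \<phi>: "\<phi> differentiable (at p)" "\<phi> p \<noteq> 0"
    and F: "\<And>i j. fco F i j differentiable (at p)"
    and nondeg: "det (F p) \<noteq> 0" and symm: "\<And>i j. F p $ i $ j = F p $ j $ i"
begin

lemma trace_dF_scaleR:
  "trace_dF (\<lambda>q. \<phi> q *\<^sub>R F q) k p = real CARD('n) * pd k \<phi> p / \<phi> p + trace_dF F k p"
proof -
  have "trace_dF (\<lambda>q. \<phi> q *\<^sub>R F q) k p = (\<Sum>i\<in>UNIV. \<Sum>j\<in>UNIV.
      pd k \<phi> p / \<phi> p * (matrix_inv (F p) $ i $ j * F p $ i $ j) + finv F i j p * pd k (fco F i j) p)"
    unfolding trace_dF_def finv_scaleR[where F = F and \<phi> = \<phi> and p = p, OF nondeg \<phi>(2)] pd_fco_scaleR[where F = F and \<phi> = \<phi> and p = p, OF \<phi>(1) F] using \<phi>(2)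
    by (intro sum.cong refl) (simp add: finv_def fco_def field_simps)
  also have "\<dots> = pd k \<phi> p / \<phi> p * (\<Sum>i\<in>UNIV. \<Sum>j\<in>UNIV. matrix_inv (F p) $ i $ j * F p $ i $ j)
      + trace_dF F k p"
    by (simp only: sum.distrib sum_distrib_left trace_dF_def)
  finally show ?thesis by (simp add: sum_matrix_inv_times_symmetric[OF nondeg] symm)
qed

lemma contract_dF_scaleR:
  "contract_dF (\<lambda>q. \<phi> q *\<^sub>R F q) k p = pd k \<phi> p / \<phi> p + contract_dF F k p"
proof -
  have "contract_dF (\<lambda>q. \<phi> q *\<^sub>R F q) k p = (\<Sum>i\<in>UNIV. \<Sum>j\<in>UNIV.
      pd j \<phi> p / \<phi> p * (matrix_inv (F p) $ i $ j * F p $ i $ k) + finv F i j p * pd j (fco F i k) p)"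
    unfolding contract_dF_def finv_scaleR[where F = F and \<phi> = \<phi> and p = p, OF nondeg \<phi>(2)] pd_fco_scaleR[where F = F and \<phi> = \<phi> and p = p, OF \<phi>(1) F] using \<phi>(2)
    by (intro sum.cong refl) (simp add: finv_def fco_def field_simps)
  also have "\<dots> = (\<Sum>j\<in>UNIV. pd j \<phi> p / \<phi> p * (\<Sum>i\<in>UNIV. matrix_inv (F p) $ i $ j * F p $ i $ k))
      + contract_dF F k p"
    by (simp add: sum.distrib contract_dF_def sum_distrib_left) (rule sum.swap)
  finally show ?thesis
    by (simp add: sum_matrix_inv_col_symmetric[OF nondeg] symm if_distrib cong: if_cong)
qed

lemma s_cov_scaleR: "s_cov (\<lambda>q. \<phi> q *\<^sub>R F q) k p = s_cov F k p"
  unfolding s_cov_eq trace_dF_scaleR contract_dF_scaleR by (simp add: algebra_simps)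

lemma c_cov_scaleR:
  assumes "CARD('n) \<ge> 2"
  shows "c_cov (\<lambda>q. \<phi> q *\<^sub>R F q) k p = c_cov F k p + pd k \<phi> p / \<phi> p"
proof -
  define n where "n = real CARD('n)"
  define d where "d = (n + 2) * (n - 1)"
  define L where "L = pd k \<phi> p / \<phi> p"
  have "d \<noteq> 0" using assms by (simp add: n_def d_def)
  moreover have "(n + 3) * (n * L + X) - 2 * (n + 1) * (L + Y) = ((n + 3) * X - 2 * (n + 1) * Y) + d * L"
    for X Y by (simp add: d_def algebra_simps)
  ultimately show ?thesis
    unfolding c_cov_eq trace_dF_scaleR contract_dF_scaleR n_def[symmetric] d_def[symmetric]
      times_divide_eq_right[symmetric] L_def[symmetric]
    by (simp add: add_divide_distrib)
qed

lemma a_ten_scaleR: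
  assumes "CARD('n) \<ge> 2"
  shows "a_ten (\<lambda>q. \<phi> q *\<^sub>R F q) i j k p = \<phi> p * a_ten F i j k p"
  unfolding a_ten_def pd_fco_scaleR[where F = F and \<phi> = \<phi> and p = p, OF \<phi>(1) F] s_cov_scaleR c_cov_scaleR[OF assms] using \<phi>(2)
  by (simp add: fco_def field_simps)

end

lemma covariants_if_dF_symmetric:
  fixes F :: "real^'n::finite \<Rightarrow> real^'n^'n"
  assumes n2: "CARD('n) \<ge> 2" and dsym: "\<And>i j k. pd j (fco F i k) p = pd k (fco F i j) p"
  shows "s_cov F k p = trace_dF F k p / (real CARD('n) + 2)" and "c_cov F k p = - s_cov F k p"
proof -
  have XY: "contract_dF F k p = trace_dF F k p"
    unfolding contract_dF_def trace_dF_def dsym ..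
  define n where "n = real CARD('n)"
  have "n \<ge> 2" using n2 by (simp add: n_def)
  then have "(n + 2) * (1 - n) \<noteq> 0" "(n + 2) * (n - 1) \<noteq> 0" "n + 2 \<noteq> 0" by auto
  then show "s_cov F k p = trace_dF F k p / (real CARD('n) + 2)" "c_cov F k p = - s_cov F k p"
    unfolding s_cov_eq c_cov_eq XY n_def[symmetric] by (simp_all add: field_simps)
qed

lemma a_ten_symmetric_if_dF_symmetric:
  fixes F :: "real^'n::finite \<Rightarrow> real^'n^'n"
  assumes n2: "CARD('n) \<ge> 2" and dsym: "\<And>i j k. pd j (fco F i k) p = pd k (fco F i j) p"
    and dsym': "\<And>i j k. pd k (fco F i j) p = pd k (fco F j i) p"
    and symm: "\<And>i j. F p $ i $ j = F p $ j $ i"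
  shows "a_ten F i j k p = a_ten F j i k p \<and> a_ten F i j k p = a_ten F i k j p"
proof -
  have "pd k (fco F j i) p = pd k (fco F i j) p" "pd j (fco F i k) p = pd k (fco F i j) p"
    by (rule dsym'[symmetric], rule dsym)
  then show ?thesis
    unfolding a_ten_def using covariants_if_dF_symmetric(2)[OF n2 dsym] symm by (simp add: fco_def)
qed

lemma dF_symmetric_if_normalized:
  fixes F :: "real^'n::finite \<Rightarrow> real^'n^'n"
  assumes cs: "\<And>k. c_cov F k p = - s_cov F k p"
    and asym: "\<And>i j k. a_ten F i j k p = a_ten F i k j p"
    and symm: "\<And>i j. F p $ i $ j = F p $ j $ i"
  shows "pd k (fco F i j) p = pd j (fco F i k) p"
proof -
  have "pd k (fco F i j) p
      = a_ten F i j k p + s_cov F k p * fco F i j p + s_cov F i p * fco F k j p + s_cov F j p * fco F k i p"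
    for i j k by (simp add: a_ten_def cs)
  then show ?thesis using asym[of i j k] symm by (simp add: fco_def)
qed

definition hessian :: "(real^'n \<Rightarrow> real) \<Rightarrow> real^'n \<Rightarrow> real^'n^'n::finite" where
  "hessian g p = (\<chi> i j. pd i (pd j g) p)"

lemma fco_hessian: "fco (hessian g) i j = pd i (pd j g)"
  by (simp add: fco_def hessian_def fun_eq_iff)

lemma lagrangian_on_iff_hessian:
  "lagrangian_on V F \<longleftrightarrow>
    (\<exists>g \<phi>. smooth_on V g \<and> (\<forall>p\<in>V. \<phi> p \<noteq> 0) \<and> (\<forall>p\<in>V. F p = \<phi> p *\<^sub>R hessian g p))"
  by (simp add: lagrangian_on_def fco_def hessian_def vec_eq_iff)

lemma hessian_symmetric:
  assumes "open V" "smooth_on V g" "p \<in> V"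
  shows "hessian g p $ i $ j = hessian g p $ j $ i"
  using pd_commute[OF assms] by (simp add: hessian_def)

lemma hessian_dF_symmetric:
  assumes V: "open V" and g: "smooth_on V g" and p: "p \<in> V"
  shows "pd j (fco (hessian g) i k) p = pd k (fco (hessian g) i j) p"
    and "pd k (fco (hessian g) i j) p = pd k (fco (hessian g) j i) p"
proof -
  have comm: "pd k (pd i (pd j g)) q = pd k (pd j (pd i g)) q" if "q \<in> V" for i j k q
    by (rule pd_cong_open[OF V that]) (rule pd_commute[OF V g])
  have "pd j (pd i (pd k g)) p = pd j (pd k (pd i g)) p" by (rule comm[OF p])
  also have "\<dots> = pd k (pd j (pd i g)) p" by (rule pd_commute[OF V smooth_on_pd[OF g] p])
  also have "\<dots> = pd k (pd i (pd j g)) p" by (rule comm[OF p, symmetric])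
  finally show "pd j (fco (hessian g) i k) p = pd k (fco (hessian g) i j) p"
    by (simp add: fco_hessian)
  show "pd k (fco (hessian g) i j) p = pd k (fco (hessian g) j i) p"
    by (simp add: fco_hessian comm[OF p])
qed

lemma lagrangian_imp_conditions:
  fixes F :: "real^'n::finite \<Rightarrow> real^'n^'n"
  assumes n2: "CARD('n) \<ge> 2" and V: "open V" "p \<in> V" and lag: "lagrangian_on V F"
    and smooth: "\<And>i j. smooth_on V (fco F i j)"
    and nondeg: "\<And>q. q \<in> V \<Longrightarrow> det (F q) \<noteq> 0"
  shows "(\<forall>i j k. a_ten F i j k p = a_ten F j i k p \<and> a_ten F i j k p = a_ten F i k j p)
    \<and> (\<forall>i j. pd j (s_cov F i) p = pd i (s_cov F j) p)"
proof -
  obtain g \<phi> where g: "smooth_on V g" and \<phi>: "\<And>q. q \<in> V \<Longrightarrow> \<phi> q \<noteq> 0"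
    and FG: "\<And>q. q \<in> V \<Longrightarrow> F q = \<phi> q *\<^sub>R hessian g q"
    using lag unfolding lagrangian_on_iff_hessian by blast
  let ?G = "hessian g"
  have sG: "smooth_on V (fco ?G i j)" for i j by (simp add: fco_hessian smooth_on_pd g)
  have dG: "fco ?G i j differentiable (at q)" if "q \<in> V" for q i j
    by (rule smooth_on_imp_differentiable_at[OF V(1) sG that])
  have symG: "?G q $ i $ j = ?G q $ j $ i" if "q \<in> V" for q i j
    by (rule hessian_symmetric[OF V(1) g that])
  have detG: "det (?G q) \<noteq> 0" if "q \<in> V" for q
    using nondeg[OF that] by (simp add: FG[OF that] det_scaleR)
  have d\<phi>: "\<phi> differentiable (at q)" if q: "q \<in> V" for q
    using scale_factor_differentiable[OF V(1) q FG dG[OF q] detG[OF q]]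
      smooth_on_imp_differentiable_at[OF V(1) smooth q] by blast
  have sF: "s_cov F k q = trace_dF ?G k q / (real CARD('n) + 2)" if q: "q \<in> V" for q k
    using covariants_cong_open(1)[OF V(1) q FG] s_cov_scaleR[OF d\<phi>[OF q] \<phi>[OF q] dG[OF q] detG[OF q]
        symG[OF q]] covariants_if_dF_symmetric(1)[OF n2 hessian_dF_symmetric(1)[OF V(1) g q]]
    by simp
  have pd_sF: "pd l (s_cov F k) p = pd l (trace_dF ?G k) p / (real CARD('n) + 2)" for k l
  proof -
    have "pd l (s_cov F k) p = pd l (\<lambda>q. trace_dF ?G k q / (real CARD('n) + 2)) p"
      by (rule pd_cong_open[OF V]) (rule sF)
    also have "\<dots> = pd l (trace_dF ?G k) p / (real CARD('n) + 2)"
      by (rule pd_divide_const, rule smooth_on_imp_differentiable_at[OF V(1)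
            smooth_on_trace_dF[OF V(1) sG detG] V(2)])
    finally show ?thesis .
  qed
  have "pd j (s_cov F i) p = pd i (s_cov F j) p" for i j
    unfolding pd_sF using trace_dF_closed[OF V(1) sG detG symG V(2)] by simp
  moreover have "a_ten F i j k p = \<phi> p * a_ten ?G i j k p" for i j k
    using covariants_cong_open(3)[OF V FG] a_ten_scaleR[OF d\<phi>[OF V(2)] \<phi>[OF V(2)] dG[OF V(2)]
        detG[OF V(2)] symG[OF V(2)] n2] by simp
  moreover have "a_ten ?G i j k p = a_ten ?G j i k p \<and> a_ten ?G i j k p = a_ten ?G i k j p" for i j k
    by (rule a_ten_symmetric_if_dF_symmetric[OF n2 hessian_dF_symmetric[OF V(1) g V(2)] symG[OF V(2)]])
  ultimately show ?thesis by simp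
qed

lemma c_plus_s_potential:
  fixes F :: "real^'n::finite \<Rightarrow> real^'n^'n"
  assumes n2: "CARD('n) \<ge> 2" and U: "open U" and smooth: "\<And>i j. smooth_on U (fco F i j)"
    and symm: "\<And>p i j. p \<in> U \<Longrightarrow> F p $ i $ j = F p $ j $ i"
    and nondeg: "\<And>p. p \<in> U \<Longrightarrow> det (F p) \<noteq> 0"
    and s_closed: "\<And>p i j. p \<in> U \<Longrightarrow> pd j (s_cov F i) p = pd i (s_cov F j) p"
    and ball: "ball p0 r \<subseteq> U"
  shows "\<exists>\<psi>. smooth_on (ball p0 r) \<psi> \<and> (\<forall>q\<in>ball p0 r. \<forall>k. pd k \<psi> q = c_cov F k q + s_cov F k q)"
proof -
  define w where "w k q = (trace_dF F k q - (real CARD('n) + 2) * s_cov F k q) / real CARD('n)" for k q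
  have sX: "smooth_on U (trace_dF F k)" for k by (rule smooth_on_trace_dF[OF U smooth nondeg])
  have sS: "smooth_on U (s_cov F k)" for k by (rule smooth_on_s_cov[OF U smooth nondeg])
  have "smooth_on U (w k)" for k
    unfolding w_def[abs_def]
    by (intro smooth_on_divide_const[OF U] smooth_on_diff[OF U] smooth_on_cmult[OF U] sX sS)
  moreover have "pd j (w i) q = pd i (w j) q" if q: "q \<in> U" for q i j
  proof -
    have "pd l (w k) q = (pd l (trace_dF F k) q - (real CARD('n) + 2) * pd l (s_cov F k) q)
        / real CARD('n)" for k l
      using smooth_on_imp_differentiable_at[OF U sX q] smooth_on_imp_differentiable_at[OF U sS q]
      unfolding w_def by (simp add: pd_divide_const pd_diff pd_cmult differentiable_mult differentiable_diff)
    then show ?thesis using trace_dF_closed[OF U smooth nondeg symm q] s_closed[OF q] by simp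
  qed
  ultimately obtain \<psi> where "smooth_on (ball p0 r) \<psi>" "\<forall>q\<in>ball p0 r. \<forall>k. pd k \<psi> q = w k q"
    using poincare_lemma_ball[where w = w] smooth_on_subset[OF _ ball] ball by blast
  then show ?thesis using c_cov_plus_s_cov[OF n2] by (auto simp: w_def)
qed

lemma rescaled_dF_symmetric:
  fixes F :: "real^'n::finite \<Rightarrow> real^'n^'n"
  assumes n2: "CARD('n) \<ge> 2" and V: "open V" "q \<in> V" and smooth: "\<And>i j. smooth_on V (fco F i j)"
    and symm: "\<And>i j. F q $ i $ j = F q $ j $ i" and nondeg: "det (F q) \<noteq> 0"
    and a_symm: "\<And>i j k. a_ten F i j k q = a_ten F i k j q"
    and \<psi>: "\<psi> differentiable (at q)" "\<And>k. pd k \<psi> q = c_cov F k q + s_cov F k q"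
  shows "pd k (fco (\<lambda>q. exp (- \<psi> q) *\<^sub>R F q) i j) q = pd j (fco (\<lambda>q. exp (- \<psi> q) *\<^sub>R F q) i k) q"
proof -
  let ?\<phi> = "\<lambda>q. exp (- \<psi> q)"
  have d\<phi>: "?\<phi> differentiable (at q)"
  proof -
    obtain D where "(\<psi> has_derivative D) (at q)" using \<psi>(1) unfolding differentiable_def by blast
    then have "(?\<phi> has_derivative (\<lambda>h. ?\<phi> q * - D h)) (at q)" by (auto intro!: derivative_eq_intros)
    then show ?thesis unfolding differentiable_def by blast
  qed
  have dF: "fco F i j differentiable (at q)" for i j by (rule smooth_on_imp_differentiable_at[OF V(1) smooth V(2)])
  have "pd k ?\<phi> q = ?\<phi> q * - pd k \<psi> q" for k
    using pd_exp[of "\<lambda>q. - \<psi> q"] pd_cmult[OF \<psi>(1), of k "-1"] \<psi>(1) by (simp add: differentiable_minus)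
  then have "pd k ?\<phi> q / ?\<phi> q = - (c_cov F k q + s_cov F k q)" for k by (simp add: \<psi>(2))
  then have "c_cov (\<lambda>q. ?\<phi> q *\<^sub>R F q) k q = - s_cov (\<lambda>q. ?\<phi> q *\<^sub>R F q) k q" for k
    using c_cov_scaleR[OF d\<phi> _ dF nondeg symm n2] s_cov_scaleR[OF d\<phi> _ dF nondeg symm] by simp
  moreover have "a_ten (\<lambda>q. ?\<phi> q *\<^sub>R F q) i j k q = a_ten (\<lambda>q. ?\<phi> q *\<^sub>R F q) i k j q" for i j k
    using a_ten_scaleR[OF d\<phi> _ dF nondeg symm n2] a_symm by simp
  ultimately show ?thesis
    by (rule dF_symmetric_if_normalized) (simp add: symm)
qed

lemma conditions_imp_lagrangian:
  fixes F :: "real^'n::finite \<Rightarrow> real^'n^'n"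
  assumes n2: "CARD('n) \<ge> 2" and U: "open U" and smooth: "\<And>i j. smooth_on U (fco F i j)"
    and symm: "\<And>p i j. p \<in> U \<Longrightarrow> F p $ i $ j = F p $ j $ i"
    and nondeg: "\<And>p. p \<in> U \<Longrightarrow> det (F p) \<noteq> 0"
    and a_symm: "\<And>p i j k. p \<in> U \<Longrightarrow> a_ten F i j k p = a_ten F i k j p"
    and s_closed: "\<And>p i j. p \<in> U \<Longrightarrow> pd j (s_cov F i) p = pd i (s_cov F j) p"
    and p0: "p0 \<in> U"
  shows "\<exists>V. open V \<and> p0 \<in> V \<and> V \<subseteq> U \<and> lagrangian_on V F"
proof -
  obtain r where r: "r > 0" "ball p0 r \<subseteq> U" using U p0 open_contains_ball by blast
  let ?B = "ball p0 r"
  obtain \<psi> where \<psi>: "smooth_on ?B \<psi>" "\<And>q k. q \<in> ?B \<Longrightarrow> pd k \<psi> q = c_cov F k q + s_cov F k q"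
    using c_plus_s_potential[OF n2 U smooth symm nondeg s_closed r(2)] by blast
  define H where "H q = exp (- \<psi> q) *\<^sub>R F q" for q
  have fH: "fco H i j = (\<lambda>q. exp (- \<psi> q) * fco F i j q)" for i j
    by (simp add: H_def fco_def fun_eq_iff)
  have sH: "smooth_on ?B (fco H i j)" for i j
    using smooth_on_mult[OF open_ball smooth_on_exp[OF open_ball smooth_on_cmult[OF open_ball \<psi>(1), of "-1"]]
        smooth_on_subset[OF smooth r(2)]]
    by (simp add: fH)
  have symH: "fco H i j q = fco H j i q" if "q \<in> ?B" for q i j
    using symm that r(2) by (auto simp: fH fco_def)
  have codH: "pd k (fco H i j) q = pd j (fco H i k) q" if q: "q \<in> ?B" for q i j k
    unfolding H_def
    using rescaled_dF_symmetric[OF n2 open_ball q smooth_on_subset[OF smooth r(2)]] q r(2)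
      symm nondeg a_symm smooth_on_imp_differentiable_at[OF open_ball \<psi>(1) q] \<psi>(2)[OF q]
    by blast
  obtain g where g: "smooth_on ?B g" "\<forall>q\<in>?B. \<forall>i j. pd i (pd j g) q = fco H i j q"
    using hessian_potential_ball[where H = "fco H", OF sH symH codH] by blast
  have "F q = exp (\<psi> q) *\<^sub>R hessian g q" if "q \<in> ?B" for q
    using g(2) that by (simp add: vec_eq_iff hessian_def fH fco_def exp_minus)
  then have "lagrangian_on ?B F"
    unfolding lagrangian_on_iff_hessian using g(1) by (intro exI[of _ g] exI[of _ "\<lambda>q. exp (\<psi> q)"]) simp
  then show ?thesis using r by (intro exI[of _ ?B]) auto
qed

theorem proposition2:
  fixes F :: "real^'n \<Rightarrow> real^'n^'n" and U :: "(real^'n) set"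
  assumes n2: "CARD('n) \<ge> 2"
    and U: "open U" "U \<noteq> {}"
    and smooth: "\<And>i j. smooth_on U (fco F i j)"
    and symm: "\<And>p i j. p \<in> U \<Longrightarrow> F p $ i $ j = F p $ j $ i"
    and nondeg: "\<And>p. p \<in> U \<Longrightarrow> det (F p) \<noteq> 0"
  shows "(\<forall>p0\<in>U. \<exists>V. open V \<and> p0 \<in> V \<and> V \<subseteq> U \<and> lagrangian_on V F)
     \<longleftrightarrow> ((\<forall>p\<in>U. \<forall>i j k. a_ten F i j k p = a_ten F j i k p \<and> a_ten F i j k p = a_ten F i k j p)
          \<and> (\<forall>p\<in>U. \<forall>i j. pd j (s_cov F i) p = pd i (s_cov F j) p))"
proof -
  have necessary: "(\<forall>i j k. a_ten F i j k p = a_ten F j i k p \<and> a_ten F i j k p = a_ten F i k j p)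
      \<and> (\<forall>i j. pd j (s_cov F i) p = pd i (s_cov F j) p)"
    if "open V" "p \<in> V" "V \<subseteq> U" "lagrangian_on V F" for p V
    by (rule lagrangian_imp_conditions[OF n2 that(1,2,4) smooth_on_subset[OF smooth that(3)]])
      (use nondeg that(3) in blast)
  have sufficient: "\<exists>V. open V \<and> p0 \<in> V \<and> V \<subseteq> U \<and> lagrangian_on V F"
    if "p0 \<in> U" "\<And>p i j k. p \<in> U \<Longrightarrow> a_ten F i j k p = a_ten F i k j p"
      "\<And>p i j. p \<in> U \<Longrightarrow> pd j (s_cov F i) p = pd i (s_cov F j) p" for p0
    by (rule conditions_imp_lagrangian[OF n2 U(1) smooth symm nondeg that(2,3,1)])
  show ?thesis
    using necessary sufficient by (metis (no_types, lifting))
qed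

end
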